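(* A strongly regular Weingarten surface with $\nu_1=f(\nu)$, $\nu_2=g(\nu)$ admits geometric principal parameters which are isothermal (i.e. with $E=G$, $F=0$) if and only if $f'(\nu)+g'(\nu)=0$, i.e. if and only if the mean curvature $H=\frac{f(\nu)+g(\nu)}{2}$ is constant.
   Context: For a surface $x=x(u,v)$ without umbilical points parameterized by principal parameters ($F=M=0$, with $E,F,G$, $L,M,N$ the coefficients of the first and second fundamental forms): $\nu_1=L/E$, $\nu_2=N/G$, $\gamma_1=-\frac{E_v}{2E\sqrt G}$, $\gamma_2=\frac{G_u}{2G\sqrt E}$. The surface is strongly regular if $(\nu_1-\nu_2)\gamma_1\gamma_2\neq0$, with the convention $\nu_1-\nu_2>0$. A strongly regular surface is Weingarten if there exist differentiable $f(\nu),g(\nu)$, $\nu\in\mathcal I\subseteq\mathbb R$, with $f-g>0$, $f'g'\neq0$, and a differentiable $\nu(u,v)\in\mathcal I$ with $\nu_u\nu_v\neq0$, such that $\nu_1=f(\nu)$, $\nu_2=g(\nu)$. With $\Phi$ an antiderivative of $f'/(f-g)$ and $\Psi$ an antiderivative of $g'/(g-f)$, put $\lambda=\ln\sqrt E+\Phi(\nu)$ and $\mu=\ln\sqrt G+\Psi(\nu)$. Principal parameters are geometric principal parameters if $\lambda$ and $\mu$ are constants. *)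

theory Defs
  imports "HOL-Analysis.Analysis" "HOL-Analysis.Cross3"
begin

definition pd_u :: "(real \<times> real \<Rightarrow> 'a::real_normed_vector) \<Rightarrow> real \<times> real \<Rightarrow> 'a" where
  "pd_u h p = vector_derivative (\<lambda>t. h (t, snd p)) (at (fst p))"

definition pd_v :: "(real \<times> real \<Rightarrow> 'a::real_normed_vector) \<Rightarrow> real \<times> real \<Rightarrow> 'a" where
  "pd_v h p = vector_derivative (\<lambda>t. h (fst p, t)) (at (snd p))"

fun Ck_on :: "nat \<Rightarrow> (real \<times> real) set \<Rightarrow> (real \<times> real \<Rightarrow> 'a::real_normed_vector) \<Rightarrow> bool" where
  "Ck_on 0 U h = continuous_on U h"
| "Ck_on (Suc k) U h = ((\<forall>p\<in>U. h differentiable (at p)) \<and> Ck_on k U (pd_u h) \<and> Ck_on k U (pd_v h))"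

definition smooth_on2 :: "(real \<times> real) set \<Rightarrow> (real \<times> real \<Rightarrow> 'a::real_normed_vector) \<Rightarrow> bool" where
  "smooth_on2 U h \<longleftrightarrow> (\<forall>k. Ck_on k U h)"

type_synonym surf = "real \<times> real \<Rightarrow> real ^ 3"

definition fE :: "surf \<Rightarrow> real \<times> real \<Rightarrow> real" where
  "fE x p = pd_u x p \<bullet> pd_u x p"
definition fF :: "surf \<Rightarrow> real \<times> real \<Rightarrow> real" where
  "fF x p = pd_u x p \<bullet> pd_v x p"
definition fG :: "surf \<Rightarrow> real \<times> real \<Rightarrow> real" where
  "fG x p = pd_v x p \<bullet> pd_v x p"

definition unit_normal :: "surf \<Rightarrow> real \<times> real \<Rightarrow> real ^ 3" where
  "unit_normal x p = (1 / norm (cross3 (pd_u x p) (pd_v x p))) *\<^sub>R (cross3 (pd_u x p) (pd_v x p))"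

definition fL :: "surf \<Rightarrow> real \<times> real \<Rightarrow> real" where
  "fL x p = pd_u (pd_u x) p \<bullet> unit_normal x p"
definition fM :: "surf \<Rightarrow> real \<times> real \<Rightarrow> real" where
  "fM x p = pd_v (pd_u x) p \<bullet> unit_normal x p"
definition fN :: "surf \<Rightarrow> real \<times> real \<Rightarrow> real" where
  "fN x p = pd_v (pd_v x) p \<bullet> unit_normal x p"

definition nu1 :: "surf \<Rightarrow> real \<times> real \<Rightarrow> real" where
  "nu1 x p = fL x p / fE x p"
definition nu2 :: "surf \<Rightarrow> real \<times> real \<Rightarrow> real" where
  "nu2 x p = fN x p / fG x p"
definition gamma1 :: "surf \<Rightarrow> real \<times> real \<Rightarrow> real" where
  "gamma1 x p = - pd_v (fE x) p / (2 * fE x p * sqrt (fG x p))"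
definition gamma2 :: "surf \<Rightarrow> real \<times> real \<Rightarrow> real" where
  "gamma2 x p = pd_u (fG x) p / (2 * fG x p * sqrt (fE x p))"

definition principal_param :: "(real \<times> real) set \<Rightarrow> surf \<Rightarrow> bool" where
  "principal_param U x \<longleftrightarrow> open U \<and> smooth_on2 U x \<and>
     (\<forall>p\<in>U. cross3 (pd_u x p) (pd_v x p) \<noteq> 0 \<and> fF x p = 0 \<and> fM x p = 0)"

text \<open>Strongly regular, with the convention nu1 - nu2 > 0 (this also excludes umbilics).\<close>
definition strongly_regular :: "(real \<times> real) set \<Rightarrow> surf \<Rightarrow> bool" where
  "strongly_regular U x \<longleftrightarrow> principal_param U x \<and>
     (\<forall>p\<in>U. nu1 x p - nu2 x p > 0 \<and> (nu1 x p - nu2 x p) * gamma1 x p * gamma2 x p \<noteq> 0)"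

definition weingarten ::
  "(real \<times> real) set \<Rightarrow> surf \<Rightarrow> real set \<Rightarrow> (real \<Rightarrow> real) \<Rightarrow> (real \<Rightarrow> real)
     \<Rightarrow> (real \<times> real \<Rightarrow> real) \<Rightarrow> bool" where
  "weingarten U x I f g nu \<longleftrightarrow> strongly_regular U x \<and>
     is_interval I \<and>
     (\<forall>t\<in>I. f differentiable (at t) \<and> g differentiable (at t) \<and>
             f t - g t > 0 \<and> deriv f t * deriv g t \<noteq> 0) \<and>
     (\<forall>p\<in>U. nu differentiable (at p) \<and> nu p \<in> I \<and>
             pd_u nu p * pd_v nu p \<noteq> 0 \<and>
             nu1 x p = f (nu p) \<and> nu2 x p = g (nu p))"

definition lam :: "surf \<Rightarrow> (real \<Rightarrow> real) \<Rightarrow> (real \<times> real \<Rightarrow> real) \<Rightarrow> real \<times> real \<Rightarrow> real" where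
  "lam x Phi nu p = ln (sqrt (fE x p)) + Phi (nu p)"
definition mu :: "surf \<Rightarrow> (real \<Rightarrow> real) \<Rightarrow> (real \<times> real \<Rightarrow> real) \<Rightarrow> real \<times> real \<Rightarrow> real" where
  "mu x Psi nu p = ln (sqrt (fG x p)) + Psi (nu p)"

definition geometric_principal :: "(real \<times> real) set \<Rightarrow> surf \<Rightarrow> (real \<Rightarrow> real) \<Rightarrow> (real \<Rightarrow> real)
     \<Rightarrow> (real \<times> real \<Rightarrow> real) \<Rightarrow> bool" where
  "geometric_principal U x Phi Psi nu \<longleftrightarrow>
     (\<exists>c. \<forall>p\<in>U. lam x Phi nu p = c) \<and> (\<exists>d. \<forall>p\<in>U. mu x Psi nu p = d)"

definition diffeo2 :: "(real \<times> real) set \<Rightarrow> (real \<times> real) set \<Rightarrow> (real \<times> real \<Rightarrow> real \<times> real) \<Rightarrow> bool" where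
  "diffeo2 V U phi \<longleftrightarrow> open V \<and> open U \<and> bij_betw phi V U \<and> smooth_on2 V phi \<and>
     smooth_on2 U (inv_into V phi)"

definition admits_isothermal_geometric_principal ::
  "(real \<times> real) set \<Rightarrow> surf \<Rightarrow> real set \<Rightarrow> (real \<Rightarrow> real) \<Rightarrow> (real \<Rightarrow> real)
     \<Rightarrow> (real \<times> real \<Rightarrow> real) \<Rightarrow> (real \<Rightarrow> real) \<Rightarrow> (real \<Rightarrow> real) \<Rightarrow> bool" where
  "admits_isothermal_geometric_principal U x I f g nu Phi Psi \<longleftrightarrow>
     (\<exists>V phi. diffeo2 V U phi \<and>
        weingarten V (x \<circ> phi) I f g (nu \<circ> phi) \<and>
        geometric_principal V (x \<circ> phi) Phi Psi (nu \<circ> phi) \<and>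
        (\<forall>q\<in>V. fE (x \<circ> phi) q = fG (x \<circ> phi) q \<and> fF (x \<circ> phi) q = 0))"

end

theory Submission
  imports Defs
begin

text \<open>
  If the principal parameters can be changed into isothermal geometric ones, then E = G makes
  \<lambda> - \<mu> = \<Phi>(\<nu>) - \<Psi>(\<nu>) constant; differentiating along a u-line, where \<nu>_u \<noteq> 0, gives
  (f' + g')/(f - g) = 0. Conversely, if f' + g' = 0 then H = (f + g)/2 is constant, and the
  Codazzi equations L_v = H E_v, N_u = H G_u show that P = L - H E = E (f - g)/2 depends
  only on u and Q = H G - N = G (f - g)/2 only on v. Rescaling ds = \<surd>P du, dt = \<surd>Q dv keeps
  the parameters principal and makes E = G = 2/(f - g); since (ln (f - g))' = 2 f'/(f - g)
  when g' = -f', both \<lambda> and \<mu> are then constant. The last equivalence holds because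
  ((f + g)/2 \<circ> \<nu>)_u = (f' + g')/2 \<cdot> \<nu>_u with \<nu>_u \<noteq> 0.
\<close>

lemma has_vector_derivative_u_slice:
  assumes "(h has_derivative D) (at p)"
  shows "((\<lambda>t. h (t, snd p)) has_vector_derivative D (1, 0)) (at (fst p))"
proof -
  have "((\<lambda>t. (t, snd p)) has_derivative (\<lambda>s. (s, 0))) (at (fst p))"
    by (auto intro!: derivative_eq_intros)
  from has_derivative_compose[OF this] assms
  have "((\<lambda>t. h (t, snd p)) has_derivative (\<lambda>s. D (s, 0))) (at (fst p))" by simp
  moreover have "(\<lambda>s. D (s, 0)) = (\<lambda>s. s *\<^sub>R D (1, 0))"
  proof
    fix s :: real
    show "D (s, 0) = s *\<^sub>R D (1, 0)"
      using linear_scale[OF has_derivative_linear[OF assms], of s "(1, 0)"] by simp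
  qed
  ultimately show ?thesis by (simp add: has_vector_derivative_def)
qed

lemma has_vector_derivative_v_slice:
  assumes "(h has_derivative D) (at p)"
  shows "((\<lambda>t. h (fst p, t)) has_vector_derivative D (0, 1)) (at (snd p))"
proof -
  have "((\<lambda>t. (fst p, t)) has_derivative (\<lambda>s. (0, s))) (at (snd p))"
    by (auto intro!: derivative_eq_intros)
  from has_derivative_compose[OF this] assms
  have "((\<lambda>t. h (fst p, t)) has_derivative (\<lambda>s. D (0, s))) (at (snd p))" by simp
  moreover have "(\<lambda>s. D (0, s)) = (\<lambda>s. s *\<^sub>R D (0, 1))"
  proof
    fix s :: real
    show "D (0, s) = s *\<^sub>R D (0, 1)"
      using linear_scale[OF has_derivative_linear[OF assms], of s "(0, 1)"] by simp
  qed
  ultimately show ?thesis by (simp add: has_vector_derivative_def)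
qed

lemma pd_u_eqI: "((\<lambda>t. h (t, snd p)) has_vector_derivative D) (at (fst p)) \<Longrightarrow> pd_u h p = D"
  unfolding pd_u_def by (rule vector_derivative_at)

lemma pd_v_eqI: "((\<lambda>t. h (fst p, t)) has_vector_derivative D) (at (snd p)) \<Longrightarrow> pd_v h p = D"
  unfolding pd_v_def by (rule vector_derivative_at)

lemma pd_u_eqI_real: "((\<lambda>t. h (t, snd p)) has_real_derivative D) (at (fst p)) \<Longrightarrow> pd_u h p = D"
  by (rule pd_u_eqI) (simp add: has_real_derivative_iff_has_vector_derivative)

lemma pd_v_eqI_real: "((\<lambda>t. h (fst p, t)) has_real_derivative D) (at (snd p)) \<Longrightarrow> pd_v h p = D"
  by (rule pd_v_eqI) (simp add: has_real_derivative_iff_has_vector_derivative)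

lemma pd_u_eq_derivative: "(h has_derivative D) (at p) \<Longrightarrow> pd_u h p = D (1, 0)"
  by (rule pd_u_eqI[OF has_vector_derivative_u_slice])

lemma pd_v_eq_derivative: "(h has_derivative D) (at p) \<Longrightarrow> pd_v h p = D (0, 1)"
  by (rule pd_v_eqI[OF has_vector_derivative_v_slice])

lemma has_vector_derivative_pd_u:
  "h differentiable (at p) \<Longrightarrow> ((\<lambda>t. h (t, snd p)) has_vector_derivative pd_u h p) (at (fst p))"
  unfolding differentiable_def using has_vector_derivative_u_slice pd_u_eq_derivative by metis

lemma has_vector_derivative_pd_v:
  "h differentiable (at p) \<Longrightarrow> ((\<lambda>t. h (fst p, t)) has_vector_derivative pd_v h p) (at (snd p))"
  unfolding differentiable_def using has_vector_derivative_v_slice pd_v_eq_derivative by metis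

lemma has_real_derivative_pd_u:
  "(h :: real \<times> real \<Rightarrow> real) differentiable (at p) \<Longrightarrow>
    ((\<lambda>t. h (t, snd p)) has_real_derivative pd_u h p) (at (fst p))"
  using has_vector_derivative_pd_u has_real_derivative_iff_has_vector_derivative by blast

lemma has_real_derivative_pd_v:
  "(h :: real \<times> real \<Rightarrow> real) differentiable (at p) \<Longrightarrow>
    ((\<lambda>t. h (fst p, t)) has_real_derivative pd_v h p) (at (snd p))"
  using has_vector_derivative_pd_v has_real_derivative_iff_has_vector_derivative by blast

lemma open_u_slice: "open U \<Longrightarrow> open {t. (t, s) \<in> U}"
  using open_vimage[of U "\<lambda>t. (t, s)"]
  by (simp add: vimage_def continuous_on_Pair continuous_on_id continuous_on_const)

lemma open_v_slice: "open U \<Longrightarrow> open {t. (s, t) \<in> U}"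
  using open_vimage[of U "\<lambda>t. (s, t)"]
  by (simp add: vimage_def continuous_on_Pair continuous_on_id continuous_on_const)

lemma pd_u_cong:
  assumes "open U" "p \<in> U" "\<And>q. q \<in> U \<Longrightarrow> h q = h' q"
  shows "pd_u h p = pd_u h' p"
proof -
  let ?S = "{t. (t, snd p) \<in> U}"
  have S: "open ?S" "fst p \<in> ?S" using open_u_slice[OF assms(1)] assms(2) by auto
  have "((\<lambda>t. h (t, snd p)) has_vector_derivative D) (at (fst p)) \<longleftrightarrow>
        ((\<lambda>t. h' (t, snd p)) has_vector_derivative D) (at (fst p))" for D
    using has_vector_derivative_transform_within_open[OF _ S] assms(3) by (metis (no_types, lifting) mem_Collect_eq)
  then show ?thesis unfolding pd_u_def vector_derivative_def by simp
qed

lemma pd_v_cong: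
  assumes "open U" "p \<in> U" "\<And>q. q \<in> U \<Longrightarrow> h q = h' q"
  shows "pd_v h p = pd_v h' p"
proof -
  let ?S = "{t. (fst p, t) \<in> U}"
  have S: "open ?S" "snd p \<in> ?S" using open_v_slice[OF assms(1)] assms(2) by auto
  have "((\<lambda>t. h (fst p, t)) has_vector_derivative D) (at (snd p)) \<longleftrightarrow>
        ((\<lambda>t. h' (fst p, t)) has_vector_derivative D) (at (snd p))" for D
    using has_vector_derivative_transform_within_open[OF _ S] assms(3) by (metis (no_types, lifting) mem_Collect_eq)
  then show ?thesis unfolding pd_v_def vector_derivative_def by simp
qed

lemma pd_u_const_on: "open U \<Longrightarrow> p \<in> U \<Longrightarrow> (\<And>q. q \<in> U \<Longrightarrow> h q = c) \<Longrightarrow> pd_u h p = 0"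
  using pd_u_cong[of U p h "\<lambda>_. c"] by (simp add: pd_u_def)

lemma pd_v_const_on: "open U \<Longrightarrow> p \<in> U \<Longrightarrow> (\<And>q. q \<in> U \<Longrightarrow> h q = c) \<Longrightarrow> pd_v h p = 0"
  using pd_v_cong[of U p h "\<lambda>_. c"] by (simp add: pd_v_def)

lemma pd_u_bilinear:
  assumes "bounded_bilinear bil" "a differentiable (at p)" "b differentiable (at p)"
  shows "pd_u (\<lambda>q. bil (a q) (b q)) p = bil (pd_u a p) (b p) + bil (a p) (pd_u b p)"
  using pd_u_eqI[OF bounded_bilinear.has_vector_derivative[OF assms(1)
          has_vector_derivative_pd_u[OF assms(2)] has_vector_derivative_pd_u[OF assms(3)]]]
  by (simp add: add.commute)

lemma pd_v_bilinear:
  assumes "bounded_bilinear bil" "a differentiable (at p)" "b differentiable (at p)"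
  shows "pd_v (\<lambda>q. bil (a q) (b q)) p = bil (pd_v a p) (b p) + bil (a p) (pd_v b p)"
  using pd_v_eqI[OF bounded_bilinear.has_vector_derivative[OF assms(1)
          has_vector_derivative_pd_v[OF assms(2)] has_vector_derivative_pd_v[OF assms(3)]]]
  by (simp add: add.commute)

lemmas pd_u_inner = pd_u_bilinear[OF bounded_bilinear_inner]
lemmas pd_v_inner = pd_v_bilinear[OF bounded_bilinear_inner]

lemma pd_u_comp_fst:
  "(h has_real_derivative D) (at (fst q)) \<Longrightarrow> pd_u (\<lambda>q. h (fst q)) q = D"
  by (rule pd_u_eqI_real) simp

lemma pd_v_comp_snd:
  "(h has_real_derivative D) (at (snd q)) \<Longrightarrow> pd_v (\<lambda>q. h (snd q)) q = D"
  by (rule pd_v_eqI_real) simp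

lemma pd_v_comp_fst: "pd_v (\<lambda>q. h (fst q)) = (\<lambda>q. 0)"
  by (simp add: pd_v_def fun_eq_iff)

lemma pd_u_comp_snd: "pd_u (\<lambda>q. h (snd q)) = (\<lambda>q. 0)"
  by (simp add: pd_u_def fun_eq_iff)

lemma differentiable_comp_fst:
  "(h has_real_derivative D) (at (fst q)) \<Longrightarrow> (\<lambda>q. h (fst q)) differentiable (at q)"
  by (rule differentiable_compose[of h fst])
     (auto intro: differentiableI has_field_derivative_imp_has_derivative
        bounded_linear_imp_differentiable[OF bounded_linear_fst])

lemma differentiable_comp_snd:
  "(h has_real_derivative D) (at (snd q)) \<Longrightarrow> (\<lambda>q. h (snd q)) differentiable (at q)"
  by (rule differentiable_compose[of h snd])
     (auto intro: differentiableI has_field_derivative_imp_has_derivative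
        bounded_linear_imp_differentiable[OF bounded_linear_snd])

lemma Ck_on_cong:
  assumes "open U" "Ck_on k U h" "\<And>q. q \<in> U \<Longrightarrow> h q = h' q"
  shows "Ck_on k U h'"
  using assms(3,2)
proof (induction k arbitrary: h h')
  case 0
  then show ?case using continuous_on_eq by fastforce
next
  case (Suc k)
  have "h' differentiable (at p)" if "p \<in> U" for p
  proof -
    have "h differentiable (at p)" using Suc.prems(2) that by simp
    then obtain D where "(h has_derivative D) (at p)" unfolding differentiable_def by blast
    then have "(h' has_derivative D) (at p)"
      by (rule has_derivative_transform_within_open[OF _ assms(1) that Suc.prems(1)])
    then show ?thesis unfolding differentiable_def by blast
  qed
  moreover have "Ck_on k U (pd_u h')"
    using Suc.IH[of "pd_u h" "pd_u h'"] pd_u_cong[OF assms(1) _ Suc.prems(1)] Suc.prems(2) by simp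
  moreover have "Ck_on k U (pd_v h')"
    using Suc.IH[of "pd_v h" "pd_v h'"] pd_v_cong[OF assms(1) _ Suc.prems(1)] Suc.prems(2) by simp
  ultimately show ?case by simp
qed

lemma Ck_on_Suc_imp_Ck_on: "Ck_on (Suc k) U h \<Longrightarrow> Ck_on k U h"
proof (induction k arbitrary: h)
  case 0
  then show ?case
    by (simp add: continuous_at_imp_continuous_on differentiable_imp_continuous_within)
next
  case (Suc k)
  have "\<forall>p\<in>U. h differentiable (at p)" "Ck_on (Suc k) U (pd_u h)" "Ck_on (Suc k) U (pd_v h)"
    using Suc.prems by simp_all
  with Suc.IH[of "pd_u h"] Suc.IH[of "pd_v h"] show ?case by simp
qed

lemma Ck_on_SucD:
  assumes "Ck_on (Suc k) U h"
  shows "\<And>p. p \<in> U \<Longrightarrow> h differentiable (at p)" "Ck_on k U (pd_u h)" "Ck_on k U (pd_v h)"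
    "Ck_on k U h"
  using assms Ck_on_Suc_imp_Ck_on[OF assms] by simp_all

lemma Ck_on_const: "Ck_on k U (\<lambda>p. c)"
proof (induction k arbitrary: c)
  case 0
  then show ?case by simp
next
  case (Suc k)
  have "pd_u (\<lambda>p. c) = (\<lambda>p. 0)" "pd_v (\<lambda>p. c) = (\<lambda>p. 0)"
    unfolding pd_u_def pd_v_def by simp_all
  then show ?case using Suc by simp
qed

lemma Ck_on_add:
  assumes U: "open U"
  shows "Ck_on k U a \<Longrightarrow> Ck_on k U b \<Longrightarrow> Ck_on k U (\<lambda>p. a p + b p)"
proof (induction k arbitrary: a b)
  case 0
  then show ?case by (simp add: continuous_on_add)
next
  case (Suc k)
  note da = Ck_on_SucD[OF Suc.prems(1)] and db = Ck_on_SucD[OF Suc.prems(2)]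
  have "pd_u (\<lambda>p. a p + b p) q = pd_u a q + pd_u b q" if "q \<in> U" for q
    using pd_u_eqI[where h="\<lambda>p. a p + b p", OF has_vector_derivative_add[OF
        has_vector_derivative_pd_u[OF da(1)[OF that]] has_vector_derivative_pd_u[OF db(1)[OF that]]]]
    by simp
  then have "Ck_on k U (pd_u (\<lambda>p. a p + b p))"
    using Ck_on_cong[OF U Suc.IH[OF da(2) db(2)]] by simp
  moreover have "pd_v (\<lambda>p. a p + b p) q = pd_v a q + pd_v b q" if "q \<in> U" for q
    using pd_v_eqI[where h="\<lambda>p. a p + b p", OF has_vector_derivative_add[OF
        has_vector_derivative_pd_v[OF da(1)[OF that]] has_vector_derivative_pd_v[OF db(1)[OF that]]]]
    by simp
  then have "Ck_on k U (pd_v (\<lambda>p. a p + b p))"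
    using Ck_on_cong[OF U Suc.IH[OF da(3) db(3)]] by simp
  ultimately show ?case using da(1) db(1) by (simp add: differentiable_add)
qed

lemma Ck_on_bilinear:
  fixes bil :: "'a::real_normed_vector \<Rightarrow> 'b::real_normed_vector \<Rightarrow> 'c::real_normed_vector"
  assumes bb: "bounded_bilinear bil" and U: "open U"
  shows "Ck_on k U a \<Longrightarrow> Ck_on k U b \<Longrightarrow> Ck_on k U (\<lambda>p. bil (a p) (b p))"
proof (induction k arbitrary: a b)
  case 0
  then show ?case using bounded_bilinear.continuous_on[OF bb] by simp
next
  case (Suc k)
  note da = Ck_on_SucD[OF Suc.prems(1)] and db = Ck_on_SucD[OF Suc.prems(2)]
  have "(\<lambda>p. bil (a p) (b p)) differentiable (at p)" if "p \<in> U" for p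
    using da(1)[OF that] db(1)[OF that] bounded_bilinear.FDERIV[OF bb]
    unfolding differentiable_def by blast
  moreover have "Ck_on k U (pd_u (\<lambda>p. bil (a p) (b p)))"
    using Ck_on_cong[OF U Ck_on_add[OF U Suc.IH[OF da(2) db(4)] Suc.IH[OF da(4) db(2)]]]
      pd_u_bilinear[OF bb da(1) db(1)] by simp
  moreover have "Ck_on k U (pd_v (\<lambda>p. bil (a p) (b p)))"
    using Ck_on_cong[OF U Ck_on_add[OF U Suc.IH[OF da(3) db(4)] Suc.IH[OF da(4) db(3)]]]
      pd_v_bilinear[OF bb da(1) db(1)] by simp
  ultimately show ?case by simp
qed

lemma bounded_bilinear_cross3: "bounded_bilinear cross3"
  using bilinear_cross bilinear_conv_bounded_bilinear by blast

lemmas Ck_on_scaleR = Ck_on_bilinear[OF bounded_bilinear_scaleR]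
lemmas Ck_on_mult = Ck_on_bilinear[OF bounded_bilinear_mult]
lemmas Ck_on_inner = Ck_on_bilinear[OF bounded_bilinear_inner]
lemmas Ck_on_cross3 = Ck_on_bilinear[OF bounded_bilinear_cross3]

lemma Ck_on_uminus: "open U \<Longrightarrow> Ck_on k U a \<Longrightarrow> Ck_on k U (\<lambda>p. - a p)"
  using Ck_on_scaleR[of U k "\<lambda>p. - 1" a] by (simp add: Ck_on_const)

lemma Ck_on_diff: "open U \<Longrightarrow> Ck_on k U a \<Longrightarrow> Ck_on k U b \<Longrightarrow> Ck_on k U (\<lambda>p. a p - b p)"
  using Ck_on_add[of U k a "\<lambda>p. - b p"] Ck_on_uminus[of U k b] by simp

lemma Ck_on_inverse:
  assumes U: "open U"
  shows "Ck_on k U a \<Longrightarrow> (\<And>p. p \<in> U \<Longrightarrow> a p \<noteq> (0::real)) \<Longrightarrow> Ck_on k U (\<lambda>p. inverse (a p))"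
proof (induction k arbitrary: a)
  case 0
  then show ?case by (simp add: continuous_on_inverse)
next
  case (Suc k)
  note da = Ck_on_SucD[OF Suc.prems(1)] and a0 = Suc.prems(2)
  have ih: "Ck_on k U (\<lambda>p. - inverse (a p) * inverse (a p))"
    using Ck_on_mult[OF U Ck_on_uminus[OF U] Suc.IH, OF Suc.IH] da(4) a0 by blast
  have du: "Ck_on k U (pd_u (\<lambda>p. inverse (a p)))"
  proof (rule Ck_on_cong[OF U Ck_on_mult[OF U ih da(2)]])
    show "- inverse (a q) * inverse (a q) * pd_u a q = pd_u (\<lambda>p. inverse (a p)) q" if "q \<in> U" for q
      using pd_u_eqI_real[OF DERIV_inverse_fun[OF has_real_derivative_pd_u[OF da(1)[OF that]]]]
        a0[OF that] by (simp add: power2_eq_square)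
  qed
  have dv: "Ck_on k U (pd_v (\<lambda>p. inverse (a p)))"
  proof (rule Ck_on_cong[OF U Ck_on_mult[OF U ih da(3)]])
    show "- inverse (a q) * inverse (a q) * pd_v a q = pd_v (\<lambda>p. inverse (a p)) q" if "q \<in> U" for q
      using pd_v_eqI_real[OF DERIV_inverse_fun[OF has_real_derivative_pd_v[OF da(1)[OF that]]]]
        a0[OF that] by (simp add: power2_eq_square)
  qed
  have "(\<lambda>p. inverse (a p)) differentiable (at p)" if "p \<in> U" for p
  proof (rule differentiable_compose[of inverse, OF _ da(1)[OF that]])
    show "inverse differentiable (at (a p))"
      using DERIV_inverse[of "a p" UNIV] a0[OF that] by (auto intro!: differentiableI)
  qed
  with du dv show ?case by simp
qed

lemma Ck_on_sqrt:
  assumes U: "open U"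
  shows "Ck_on k U a \<Longrightarrow> (\<And>p. p \<in> U \<Longrightarrow> a p > (0::real)) \<Longrightarrow> Ck_on k U (\<lambda>p. sqrt (a p))"
proof (induction k arbitrary: a)
  case 0
  then show ?case by (simp add: continuous_on_real_sqrt)
next
  case (Suc k)
  note da = Ck_on_SucD[OF Suc.prems(1)] and a0 = Suc.prems(2)
  have s0: "sqrt (a p) \<noteq> 0" if "p \<in> U" for p
    using a0[OF that] by simp
  have "Ck_on k U (\<lambda>p. inverse (sqrt (a p)))"
    by (rule Ck_on_inverse[OF U Suc.IH[OF da(4) a0] s0])
  then have ih: "Ck_on k U (\<lambda>p. inverse (sqrt (a p)) / 2)"
    by (rule Ck_on_cong[OF U Ck_on_mult[OF U _ Ck_on_const[of k U "1/2"]]]) simp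
  have du: "Ck_on k U (pd_u (\<lambda>p. sqrt (a p)))"
  proof (rule Ck_on_cong[OF U Ck_on_mult[OF U ih da(2)]])
    show "inverse (sqrt (a q)) / 2 * pd_u a q = pd_u (\<lambda>p. sqrt (a p)) q" if "q \<in> U" for q
      using pd_u_eqI_real[OF DERIV_chain2[OF DERIV_real_sqrt has_real_derivative_pd_u[OF da(1)[OF that]]]]
        a0[OF that] by simp
  qed
  have dv: "Ck_on k U (pd_v (\<lambda>p. sqrt (a p)))"
  proof (rule Ck_on_cong[OF U Ck_on_mult[OF U ih da(3)]])
    show "inverse (sqrt (a q)) / 2 * pd_v a q = pd_v (\<lambda>p. sqrt (a p)) q" if "q \<in> U" for q
      using pd_v_eqI_real[OF DERIV_chain2[OF DERIV_real_sqrt has_real_derivative_pd_v[OF da(1)[OF that]]]]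
        a0[OF that] by simp
  qed
  have "(\<lambda>p. sqrt (a p)) differentiable (at p)" if "p \<in> U" for p
  proof (rule differentiable_compose[of sqrt, OF _ da(1)[OF that]])
    show "sqrt differentiable (at (a p))"
      using DERIV_real_sqrt[of "a p"] a0[OF that]
      by (auto intro!: differentiableI has_field_derivative_imp_has_derivative)
  qed
  with du dv show ?case by simp
qed

lemma has_vector_derivative_compose_Pair:
  fixes G :: "real \<times> real \<Rightarrow> 'a::real_normed_vector"
  assumes G: "(G has_derivative DG) (at (f1 x, f2 x))"
    and f1: "(f1 has_real_derivative d1) (at x)" and f2: "(f2 has_real_derivative d2) (at x)"
  shows "((\<lambda>t. G (f1 t, f2 t)) has_vector_derivative d1 *\<^sub>R DG (1, 0) + d2 *\<^sub>R DG (0, 1)) (at x)"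
proof -
  have "((\<lambda>t. (f1 t, f2 t)) has_vector_derivative (d1, d2)) (at x)"
    using f1 f2 unfolding has_real_derivative_iff_has_vector_derivative
    by (rule has_vector_derivative_Pair)
  then have "((\<lambda>t. (f1 t, f2 t)) has_derivative (\<lambda>h. h *\<^sub>R (d1, d2))) (at x)"
    by (simp add: has_vector_derivative_def)
  from has_derivative_compose[OF this G]
  have "((\<lambda>t. G (f1 t, f2 t)) has_derivative (\<lambda>h. DG (h *\<^sub>R (d1, d2)))) (at x)" .
  moreover have "(\<lambda>h. DG (h *\<^sub>R (d1, d2))) = (\<lambda>h. h *\<^sub>R (d1 *\<^sub>R DG (1, 0) + d2 *\<^sub>R DG (0, 1)))"
  proof
    fix h :: real
    have lin: "linear DG" using G has_derivative_linear by blast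
    have "(h *\<^sub>R (d1, d2)) = (h * d1) *\<^sub>R (1::real, 0::real) + (h * d2) *\<^sub>R (0, 1)" by simp
    then show "DG (h *\<^sub>R (d1, d2)) = h *\<^sub>R (d1 *\<^sub>R DG (1, 0) + d2 *\<^sub>R DG (0, 1))"
      by (simp only: linear_add[OF lin] linear_scale[OF lin]) (simp add: scaleR_right_distrib)
  qed
  ultimately show ?thesis by (simp add: has_vector_derivative_def)
qed

lemma pd_u_compose_Pair:
  assumes "G differentiable (at (\<alpha> q, \<beta> q))" "\<alpha> differentiable (at q)" "\<beta> differentiable (at q)"
  shows "pd_u (\<lambda>q. G (\<alpha> q, \<beta> q)) q = pd_u \<alpha> q *\<^sub>R pd_u G (\<alpha> q, \<beta> q) + pd_u \<beta> q *\<^sub>R pd_v G (\<alpha> q, \<beta> q)"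
proof -
  obtain DG where DG: "(G has_derivative DG) (at (\<alpha> q, \<beta> q))"
    using assms(1) unfolding differentiable_def by blast
  show ?thesis
    using pd_u_eqI[OF has_vector_derivative_compose_Pair[OF _ has_real_derivative_pd_u has_real_derivative_pd_u],
        where h="\<lambda>q. G (\<alpha> q, \<beta> q)"] DG assms(2,3) pd_u_eq_derivative[OF DG] pd_v_eq_derivative[OF DG]
    by simp
qed

lemma pd_v_compose_Pair:
  assumes "G differentiable (at (\<alpha> q, \<beta> q))" "\<alpha> differentiable (at q)" "\<beta> differentiable (at q)"
  shows "pd_v (\<lambda>q. G (\<alpha> q, \<beta> q)) q = pd_v \<alpha> q *\<^sub>R pd_u G (\<alpha> q, \<beta> q) + pd_v \<beta> q *\<^sub>R pd_v G (\<alpha> q, \<beta> q)"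
proof -
  obtain DG where DG: "(G has_derivative DG) (at (\<alpha> q, \<beta> q))"
    using assms(1) unfolding differentiable_def by blast
  show ?thesis
    using pd_v_eqI[OF has_vector_derivative_compose_Pair[OF _ has_real_derivative_pd_v has_real_derivative_pd_v],
        where h="\<lambda>q. G (\<alpha> q, \<beta> q)"] DG assms(2,3) pd_u_eq_derivative[OF DG] pd_v_eq_derivative[OF DG]
    by simp
qed

lemma Ck_on_compose_Pair:
  fixes G :: "real \<times> real \<Rightarrow> 'a::real_normed_vector" and \<alpha> \<beta> :: "real \<times> real \<Rightarrow> real"
  assumes U: "open U" and V: "open V"
  shows "Ck_on k U G \<Longrightarrow> Ck_on k V \<alpha> \<Longrightarrow> Ck_on k V \<beta> \<Longrightarrow> (\<And>q. q \<in> V \<Longrightarrow> (\<alpha> q, \<beta> q) \<in> U)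
         \<Longrightarrow> Ck_on k V (\<lambda>q. G (\<alpha> q, \<beta> q))"
proof (induction k arbitrary: G \<alpha> \<beta>)
  case 0
  have "continuous_on V (\<lambda>q. (\<alpha> q, \<beta> q))" using 0 by (auto intro: continuous_on_Pair)
  then show ?case
    using continuous_on_compose2[of U G V "\<lambda>q. (\<alpha> q, \<beta> q)"] 0 by fastforce
next
  case (Suc k)
  note dG = Ck_on_SucD[OF Suc.prems(1)] and da = Ck_on_SucD[OF Suc.prems(2)]
    and db = Ck_on_SucD[OF Suc.prems(3)] and maps = Suc.prems(4)
  have IHu: "Ck_on k V (\<lambda>q. pd_u G (\<alpha> q, \<beta> q))"
    by (rule Suc.IH[OF dG(2) da(4) db(4)]) (fact maps)
  have IHv: "Ck_on k V (\<lambda>q. pd_v G (\<alpha> q, \<beta> q))"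
    by (rule Suc.IH[OF dG(3) da(4) db(4)]) (fact maps)
  have "Ck_on k V (pd_u (\<lambda>q. G (\<alpha> q, \<beta> q)))"
    using Ck_on_cong[OF V Ck_on_add[OF V Ck_on_scaleR[OF V da(2) IHu] Ck_on_scaleR[OF V db(2) IHv]]]
      pd_u_compose_Pair[OF dG(1)[OF maps] da(1) db(1)] by simp
  moreover have "Ck_on k V (pd_v (\<lambda>q. G (\<alpha> q, \<beta> q)))"
    using Ck_on_cong[OF V Ck_on_add[OF V Ck_on_scaleR[OF V da(3) IHu] Ck_on_scaleR[OF V db(3) IHv]]]
      pd_v_compose_Pair[OF dG(1)[OF maps] da(1) db(1)] by simp
  moreover have "(\<lambda>q. G (\<alpha> q, \<beta> q)) differentiable (at p)" if "p \<in> V" for p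
    using differentiable_compose[of G, OF dG(1)[OF maps[OF that]] differentiable_Pair[OF da(1) db(1)]]
      that by simp
  ultimately show ?case by simp
qed

lemma Ck_on_fst: "Ck_on k U (fst :: real \<times> real \<Rightarrow> real)"
proof (cases k)
  case (Suc m)
  have "pd_u fst = (\<lambda>p::real \<times> real. 1::real)" "pd_v fst = (\<lambda>p::real \<times> real. 0::real)"
    unfolding pd_u_def pd_v_def by auto
  then show ?thesis using Suc Ck_on_const[of m U "1::real"] Ck_on_const[of m U "0::real"]
    by (simp add: bounded_linear_fst bounded_linear_imp_differentiable)
qed (simp add: continuous_on_fst continuous_on_id)

lemma Ck_on_snd: "Ck_on k U (snd :: real \<times> real \<Rightarrow> real)"
proof (cases k)
  case (Suc m)
  have "pd_u snd = (\<lambda>p::real \<times> real. 0::real)" "pd_v snd = (\<lambda>p::real \<times> real. 1::real)"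
    unfolding pd_u_def pd_v_def by auto
  then show ?thesis using Suc Ck_on_const[of m U "1::real"] Ck_on_const[of m U "0::real"]
    by (simp add: bounded_linear_snd bounded_linear_imp_differentiable)
qed (simp add: continuous_on_snd continuous_on_id)

lemma Ck_on_Suc_comp_fst:
  assumes "open V" "\<And>q. q \<in> V \<Longrightarrow> (\<phi> has_real_derivative \<phi>' (fst q)) (at (fst q))"
    and "Ck_on k V (\<lambda>q. \<phi>' (fst q))"
  shows "Ck_on (Suc k) V (\<lambda>q. \<phi> (fst q))"
proof -
  have "Ck_on k V (pd_u (\<lambda>q. \<phi> (fst q)))"
    by (rule Ck_on_cong[OF assms(1,3)]) (use pd_u_comp_fst[OF assms(2)] in simp)
  moreover have "Ck_on k V (pd_v (\<lambda>q. \<phi> (fst q)))"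
    by (simp add: pd_v_comp_fst Ck_on_const)
  ultimately show ?thesis using differentiable_comp_fst[OF assms(2)] by simp
qed

lemma Ck_on_Suc_comp_snd:
  assumes "open V" "\<And>q. q \<in> V \<Longrightarrow> (\<phi> has_real_derivative \<phi>' (snd q)) (at (snd q))"
    and "Ck_on k V (\<lambda>q. \<phi>' (snd q))"
  shows "Ck_on (Suc k) V (\<lambda>q. \<phi> (snd q))"
proof -
  have "Ck_on k V (pd_v (\<lambda>q. \<phi> (snd q)))"
    by (rule Ck_on_cong[OF assms(1,3)]) (use pd_v_comp_snd[OF assms(2)] in simp)
  moreover have "Ck_on k V (pd_u (\<lambda>q. \<phi> (snd q)))"
    by (simp add: pd_u_comp_snd Ck_on_const)
  ultimately show ?thesis using differentiable_comp_snd[OF assms(2)] by simp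
qed

lemma smooth_on2_pd_u: "smooth_on2 U h \<Longrightarrow> smooth_on2 U (pd_u h)"
  unfolding smooth_on2_def using Ck_on_SucD(2) by blast

lemma smooth_on2_pd_v: "smooth_on2 U h \<Longrightarrow> smooth_on2 U (pd_v h)"
  unfolding smooth_on2_def using Ck_on_SucD(3) by blast

lemma smooth_on2_imp_differentiable: "smooth_on2 U h \<Longrightarrow> p \<in> U \<Longrightarrow> h differentiable (at p)"
  unfolding smooth_on2_def using Ck_on_SucD(1) by blast

lemma smooth_on2_imp_continuous_on: "smooth_on2 U h \<Longrightarrow> continuous_on U h"
  unfolding smooth_on2_def using Ck_on.simps(1) by blast

lemma smooth_on2_cong: "open U \<Longrightarrow> smooth_on2 U h \<Longrightarrow> (\<And>q. q \<in> U \<Longrightarrow> h q = h' q) \<Longrightarrow> smooth_on2 U h'"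
  unfolding smooth_on2_def using Ck_on_cong by blast

lemma smooth_on2_const: "smooth_on2 U (\<lambda>p. c)"
  unfolding smooth_on2_def by (simp add: Ck_on_const)

lemma smooth_on2_fst: "smooth_on2 U (fst :: real \<times> real \<Rightarrow> real)"
  unfolding smooth_on2_def by (simp add: Ck_on_fst)

lemma smooth_on2_snd: "smooth_on2 U (snd :: real \<times> real \<Rightarrow> real)"
  unfolding smooth_on2_def by (simp add: Ck_on_snd)

lemma smooth_on2_add: "open U \<Longrightarrow> smooth_on2 U a \<Longrightarrow> smooth_on2 U b \<Longrightarrow> smooth_on2 U (\<lambda>p. a p + b p)"
  unfolding smooth_on2_def by (simp add: Ck_on_add)

lemma smooth_on2_diff: "open U \<Longrightarrow> smooth_on2 U a \<Longrightarrow> smooth_on2 U b \<Longrightarrow> smooth_on2 U (\<lambda>p. a p - b p)"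
  unfolding smooth_on2_def by (simp add: Ck_on_diff)

lemma smooth_on2_scaleR:
  "open U \<Longrightarrow> smooth_on2 U a \<Longrightarrow> smooth_on2 U b \<Longrightarrow> smooth_on2 U (\<lambda>p. a p *\<^sub>R b p)"
  unfolding smooth_on2_def by (simp add: Ck_on_scaleR)

lemma smooth_on2_mult:
  "open U \<Longrightarrow> smooth_on2 U a \<Longrightarrow> smooth_on2 U b \<Longrightarrow> smooth_on2 U (\<lambda>p. a p * b p :: real)"
  unfolding smooth_on2_def by (simp add: Ck_on_mult)

lemma smooth_on2_inner:
  "open U \<Longrightarrow> smooth_on2 U a \<Longrightarrow> smooth_on2 U b \<Longrightarrow> smooth_on2 U (\<lambda>p. a p \<bullet> b p)"
  unfolding smooth_on2_def by (simp add: Ck_on_inner)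

lemma smooth_on2_cross3:
  "open U \<Longrightarrow> smooth_on2 U a \<Longrightarrow> smooth_on2 U b \<Longrightarrow> smooth_on2 U (\<lambda>p. cross3 (a p) (b p))"
  unfolding smooth_on2_def by (simp add: Ck_on_cross3)

lemma smooth_on2_inverse:
  "open U \<Longrightarrow> smooth_on2 U a \<Longrightarrow> (\<And>p. p \<in> U \<Longrightarrow> a p \<noteq> (0::real)) \<Longrightarrow> smooth_on2 U (\<lambda>p. inverse (a p))"
  unfolding smooth_on2_def by (simp add: Ck_on_inverse)

lemma smooth_on2_sqrt:
  "open U \<Longrightarrow> smooth_on2 U a \<Longrightarrow> (\<And>p. p \<in> U \<Longrightarrow> a p > (0::real)) \<Longrightarrow> smooth_on2 U (\<lambda>p. sqrt (a p))"
  unfolding smooth_on2_def by (simp add: Ck_on_sqrt)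

lemma smooth_on2_compose_Pair:
  "open U \<Longrightarrow> open V \<Longrightarrow> smooth_on2 U G \<Longrightarrow> smooth_on2 V \<alpha> \<Longrightarrow> smooth_on2 V \<beta> \<Longrightarrow>
    (\<And>q. q \<in> V \<Longrightarrow> (\<alpha> q, \<beta> q) \<in> U) \<Longrightarrow> smooth_on2 V (\<lambda>q. G (\<alpha> q, \<beta> q))"
  unfolding smooth_on2_def by (simp add: Ck_on_compose_Pair)

lemma smooth_on2_Pair:
  assumes "open U" "smooth_on2 U (a :: real \<times> real \<Rightarrow> real)" "smooth_on2 U (b :: real \<times> real \<Rightarrow> real)"
  shows "smooth_on2 U (\<lambda>q. (a q, b q))"
proof (rule smooth_on2_cong[OF assms(1)])
  show "smooth_on2 U (\<lambda>q. a q *\<^sub>R (1::real, 0::real) + b q *\<^sub>R (0, 1))"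
    using assms by (intro smooth_on2_add smooth_on2_scaleR smooth_on2_const)
qed simp

section \<open>Symmetry of mixed partial derivatives\<close>

lemma second_difference_mvt:
  fixes g gu guv :: "real \<Rightarrow> real \<Rightarrow> real"
  assumes s: "0 < s"
    and gu: "\<And>r t. r \<in> {u..u+s} \<Longrightarrow> t \<in> {v..v+s} \<Longrightarrow>
               ((\<lambda>r. g r t) has_real_derivative gu r t) (at r)"
    and guv: "\<And>r t. r \<in> {u..u+s} \<Longrightarrow> t \<in> {v..v+s} \<Longrightarrow>
               (gu r has_real_derivative guv r t) (at t)"
  obtains \<xi> \<eta> where "\<xi> \<in> {u<..<u+s}" "\<eta> \<in> {v<..<v+s}"
    "g (u+s) (v+s) - g (u+s) v - g u (v+s) + g u v = s * s * guv \<xi> \<eta>"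
proof -
  have "\<exists>\<xi>>u. \<xi> < u + s \<and> (\<lambda>r. g r (v+s) - g r v) (u + s) - (\<lambda>r. g r (v+s) - g r v) u
          = (u + s - u) * (\<lambda>r. gu r (v+s) - gu r v) \<xi>"
    by (rule MVT2) (use s in \<open>auto intro!: DERIV_diff gu\<close>)
  then obtain \<xi> where \<xi>: "u < \<xi>" "\<xi> < u + s" and
    eq1: "(g (u+s) (v+s) - g (u+s) v) - (g u (v+s) - g u v) = s * (gu \<xi> (v+s) - gu \<xi> v)"
    by auto
  have "\<exists>\<eta>>v. \<eta> < v + s \<and> gu \<xi> (v + s) - gu \<xi> v = (v + s - v) * guv \<xi> \<eta>"
    by (rule MVT2) (use s \<xi> in \<open>auto intro!: guv\<close>)
  then obtain \<eta> where \<eta>: "v < \<eta>" "\<eta> < v + s" and eq2: "gu \<xi> (v+s) - gu \<xi> v = s * guv \<xi> \<eta>"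
    by auto
  show ?thesis by (rule that[of \<xi> \<eta>]) (use \<xi> \<eta> eq1 eq2 in auto)
qed

lemma mixed_partials_inner_mvt:
  fixes h :: "real \<times> real \<Rightarrow> 'a::real_inner"
  assumes s: "0 < s" and box: "{u0..u0+s} \<times> {v0..v0+s} \<subseteq> U"
    and d0: "\<And>q. q \<in> U \<Longrightarrow> h differentiable (at q)"
    and du: "\<And>q. q \<in> U \<Longrightarrow> pd_u h differentiable (at q)"
    and dv: "\<And>q. q \<in> U \<Longrightarrow> pd_v h differentiable (at q)"
  obtains \<xi> \<eta> \<xi>' \<eta>' where "\<xi> \<in> {u0<..<u0+s}" "\<eta> \<in> {v0<..<v0+s}" "\<xi>' \<in> {u0<..<u0+s}"
    "\<eta>' \<in> {v0<..<v0+s}" "pd_v (pd_u h) (\<xi>, \<eta>) \<bullet> w = pd_u (pd_v h) (\<xi>', \<eta>') \<bullet> w"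
proof -
  define \<Delta> where "\<Delta> = (h (u0+s, v0+s) - h (u0+s, v0) - h (u0, v0+s) + h (u0, v0)) \<bullet> w"
  have slices: "((\<lambda>r. h (r, t) \<bullet> w) has_real_derivative pd_u h (r, t) \<bullet> w) (at r)"
    "((\<lambda>t. h (r, t) \<bullet> w) has_real_derivative pd_v h (r, t) \<bullet> w) (at t)"
    "((\<lambda>t. pd_u h (r, t) \<bullet> w) has_real_derivative pd_v (pd_u h) (r, t) \<bullet> w) (at t)"
    "((\<lambda>r. pd_v h (r, t) \<bullet> w) has_real_derivative pd_u (pd_v h) (r, t) \<bullet> w) (at r)"
    if "r \<in> {u0..u0+s}" "t \<in> {v0..v0+s}" for r t
  proof -
    have "(r, t) \<in> U" using box that by blast
    then show "((\<lambda>r. h (r, t) \<bullet> w) has_real_derivative pd_u h (r, t) \<bullet> w) (at r)"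
      "((\<lambda>t. h (r, t) \<bullet> w) has_real_derivative pd_v h (r, t) \<bullet> w) (at t)"
      "((\<lambda>t. pd_u h (r, t) \<bullet> w) has_real_derivative pd_v (pd_u h) (r, t) \<bullet> w) (at t)"
      "((\<lambda>r. pd_v h (r, t) \<bullet> w) has_real_derivative pd_u (pd_v h) (r, t) \<bullet> w) (at r)"
      using has_vector_derivative_pd_u[OF d0] has_vector_derivative_pd_v[OF d0]
        has_vector_derivative_pd_v[OF du] has_vector_derivative_pd_u[OF dv]
        bounded_linear.has_vector_derivative[OF bounded_linear_inner_left]
      by (fastforce simp: has_real_derivative_iff_has_vector_derivative)+
  qed
  obtain \<xi> \<eta> where "\<xi> \<in> {u0<..<u0+s}" "\<eta> \<in> {v0<..<v0+s}"
    and "\<Delta> = s * s * (pd_v (pd_u h) (\<xi>, \<eta>) \<bullet> w)"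
  proof (rule second_difference_mvt[OF s, of u0 v0 "\<lambda>r t. h (r, t) \<bullet> w" "\<lambda>r t. pd_u h (r, t) \<bullet> w"])
    fix r t assume r: "r \<in> {u0..u0+s}" and t: "t \<in> {v0..v0+s}"
    show "((\<lambda>r. h (r, t) \<bullet> w) has_real_derivative pd_u h (r, t) \<bullet> w) (at r)"
      and "((\<lambda>t. pd_u h (r, t) \<bullet> w) has_real_derivative pd_v (pd_u h) (r, t) \<bullet> w) (at t)"
      using slices(1,3)[OF r t] .
  qed (auto simp: \<Delta>_def algebra_simps inner_diff_left inner_add_left)
  moreover obtain \<eta>' \<xi>' where "\<eta>' \<in> {v0<..<v0+s}" "\<xi>' \<in> {u0<..<u0+s}"
    and "\<Delta> = s * s * (pd_u (pd_v h) (\<xi>', \<eta>') \<bullet> w)"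
  proof (rule second_difference_mvt[OF s, of v0 u0 "\<lambda>t r. h (r, t) \<bullet> w" "\<lambda>t r. pd_v h (r, t) \<bullet> w"
        "\<lambda>t r. pd_u (pd_v h) (r, t) \<bullet> w"])
    fix t r assume t: "t \<in> {v0..v0+s}" and r: "r \<in> {u0..u0+s}"
    show "((\<lambda>t. h (r, t) \<bullet> w) has_real_derivative pd_v h (r, t) \<bullet> w) (at t)"
      and "((\<lambda>r. pd_v h (r, t) \<bullet> w) has_real_derivative pd_u (pd_v h) (r, t) \<bullet> w) (at r)"
      using slices(2,4)[OF r t] .
  qed (auto simp: \<Delta>_def algebra_simps inner_diff_left inner_add_left)
  ultimately show ?thesis using that s by simp
qed

text \<open>Schwarz's theorem: if the mixed partials differed at p, the preceding lemma applied in
  the direction w of their difference would contradict their continuity at p.\<close>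

lemma pd_v_pd_u_commute:
  fixes h :: "real \<times> real \<Rightarrow> 'a::real_inner"
  assumes U: "open U" and pU: "p \<in> U"
    and d0: "\<And>q. q \<in> U \<Longrightarrow> h differentiable (at q)"
    and du: "\<And>q. q \<in> U \<Longrightarrow> pd_u h differentiable (at q)"
    and dv: "\<And>q. q \<in> U \<Longrightarrow> pd_v h differentiable (at q)"
    and c1: "continuous_on U (pd_v (pd_u h))" and c2: "continuous_on U (pd_u (pd_v h))"
  shows "pd_v (pd_u h) p = pd_u (pd_v h) p"
proof (rule ccontr)
  obtain u0 v0 where p: "p = (u0, v0)" by (cases p)
  define A where "A = pd_v (pd_u h) p"
  define B where "B = pd_u (pd_v h) p"
  define w where "w = A - B"
  define e where "e = norm w / 2"
  assume "pd_v (pd_u h) p \<noteq> pd_u (pd_v h) p"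
  then have w0: "w \<noteq> 0" and e: "e > 0" by (simp_all add: A_def B_def w_def e_def)
  obtain d1 where d1: "d1 > 0" "\<And>q. q \<in> U \<Longrightarrow> dist q p < d1 \<Longrightarrow> dist (pd_v (pd_u h) q) A < e"
    using c1 pU e unfolding continuous_on_iff A_def by metis
  obtain d2 where d2: "d2 > 0" "\<And>q. q \<in> U \<Longrightarrow> dist q p < d2 \<Longrightarrow> dist (pd_u (pd_v h) q) B < e"
    using c2 pU e unfolding continuous_on_iff B_def by metis
  obtain d3 where d3: "d3 > 0" "ball p d3 \<subseteq> U" using U pU open_contains_ball by blast
  define s where "s = min d1 (min d2 d3) / 3"
  have s: "s > 0" using d1 d2 d3 by (simp add: s_def)
  have box: "(a, b) \<in> U \<and> dist (a, b) p < d1 \<and> dist (a, b) p < d2"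
    if "a \<in> {u0..u0+s}" "b \<in> {v0..v0+s}" for a b
  proof -
    have "dist (a, b) p \<le> norm (a - u0) + norm (b - v0)"
      using norm_Pair_le[of "a - u0" "b - v0"] by (simp add: p dist_norm)
    also have "\<dots> \<le> 2 * s" using that by auto
    also have "\<dots> < min d1 (min d2 d3)" using s unfolding s_def by linarith
    finally show ?thesis using d3 by (auto simp: dist_commute)
  qed
  then have "{u0..u0+s} \<times> {v0..v0+s} \<subseteq> U" by auto
  then obtain \<xi> \<eta> \<xi>' \<eta>' where \<xi>\<eta>: "\<xi> \<in> {u0<..<u0+s}" "\<eta> \<in> {v0<..<v0+s}" "\<xi>' \<in> {u0<..<u0+s}"
    "\<eta>' \<in> {v0<..<v0+s}" and eqw: "pd_v (pd_u h) (\<xi>, \<eta>) \<bullet> w = pd_u (pd_v h) (\<xi>', \<eta>') \<bullet> w"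
    using mixed_partials_inner_mvt[OF s _ d0 du dv] by blast
  define a where "a = pd_v (pd_u h) (\<xi>, \<eta>) - A"
  define b where "b = pd_u (pd_v h) (\<xi>', \<eta>') - B"
  have "norm a < e" using d1(2)[of "(\<xi>, \<eta>)"] box[of \<xi> \<eta>] \<xi>\<eta> by (simp add: a_def dist_norm)
  moreover have "norm b < e" using d2(2)[of "(\<xi>', \<eta>')"] box[of \<xi>' \<eta>'] \<xi>\<eta> by (simp add: b_def dist_norm)
  ultimately have "norm (b - a) < norm w"
    using norm_triangle_ineq4[of b a] by (simp add: e_def)
  moreover have "norm w ^ 2 = (b - a) \<bullet> w"
    using eqw by (simp add: a_def b_def w_def power2_norm_eq_inner algebra_simps inner_diff_left)
  ultimately show False
    using Cauchy_Schwarz_ineq2[of "b - a" w] w0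
    by (smt (verit) mult_strict_right_mono norm_ge_zero power2_eq_square zero_less_norm_iff)
qed

lemma smooth_on2_pd_v_pd_u_commute:
  fixes h :: "real \<times> real \<Rightarrow> 'a::real_inner"
  assumes "open U" "smooth_on2 U h" "p \<in> U"
  shows "pd_v (pd_u h) p = pd_u (pd_v h) p"
  by (rule pd_v_pd_u_commute[OF assms(1,3)])
     (use assms(2) smooth_on2_imp_differentiable smooth_on2_pd_u smooth_on2_pd_v
        smooth_on2_imp_continuous_on in blast)+

lemma DERIV_eq_0_if_comp_const:
  assumes "open V" "q \<in> V" "\<And>r. r \<in> V \<Longrightarrow> \<Theta> (\<nu> r) = C"
    and "\<nu> differentiable (at q)" "pd_u \<nu> q \<noteq> 0" "(\<Theta> has_real_derivative D) (at (\<nu> q))"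
  shows "D = 0"
proof -
  have "(\<Theta> has_real_derivative D) (at (\<nu> (fst q, snd q)))" using assms(6) by simp
  from DERIV_chain2[OF this has_real_derivative_pd_u[OF assms(4)]]
  have "((\<lambda>t. \<Theta> (\<nu> (t, snd q))) has_real_derivative D * pd_u \<nu> q) (at (fst q))" .
  moreover have "((\<lambda>t. \<Theta> (\<nu> (t, snd q))) has_real_derivative 0) (at (fst q))"
    by (rule has_field_derivative_transform_within_open[OF DERIV_const open_u_slice[OF assms(1), of "snd q"]])
       (use assms(2,3) in auto)
  ultimately have "D * pd_u \<nu> q = 0" by (rule DERIV_unique)
  then show ?thesis using assms(5) by simp
qed

lemma u_slice_const_on_rectangle:
  assumes "\<And>p. p \<in> {a<..<b} \<times> {c<..<d} \<Longrightarrow> ((\<lambda>t. k (t, snd p)) has_real_derivative 0) (at (fst p))"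
    and "u \<in> {a<..<b}" "u' \<in> {a<..<b}" "v \<in> {c<..<d}"
  shows "k (u, v) = (k (u', v) :: real)"
proof -
  have "\<exists>C. \<forall>t\<in>{a<..<b}. k (t, v) = C"
  proof (rule has_field_derivative_zero_constant)
    fix t assume "t \<in> {a<..<b}"
    then show "((\<lambda>t. k (t, v)) has_real_derivative 0) (at t within {a<..<b})"
      using assms(1)[of "(t, v)"] assms(4) by (auto intro: has_field_derivative_at_within)
  qed simp
  then show ?thesis using assms(2,3) by metis
qed

lemma v_slice_const_on_rectangle:
  assumes "\<And>p. p \<in> {a<..<b} \<times> {c<..<d} \<Longrightarrow> ((\<lambda>t. k (fst p, t)) has_real_derivative 0) (at (snd p))"
    and "u \<in> {a<..<b}" "v \<in> {c<..<d}" "v' \<in> {c<..<d}"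
  shows "k (u, v) = (k (u, v') :: real)"
proof -
  have "\<exists>C. \<forall>t\<in>{c<..<d}. k (u, t) = C"
  proof (rule has_field_derivative_zero_constant)
    fix t assume "t \<in> {c<..<d}"
    then show "((\<lambda>t. k (u, t)) has_real_derivative 0) (at t within {c<..<d})"
      using assms(1)[of "(u, t)"] assms(2) by (auto intro: has_field_derivative_at_within)
  qed simp
  then show ?thesis using assms(3,4) by metis
qed

lemma const_on_rectangle:
  assumes "\<And>p. p \<in> {a<..<b} \<times> {c<..<d} \<Longrightarrow> ((\<lambda>t. k (t, snd p)) has_real_derivative 0) (at (fst p))"
    and "\<And>p. p \<in> {a<..<b} \<times> {c<..<d} \<Longrightarrow> ((\<lambda>t. k (fst p, t)) has_real_derivative 0) (at (snd p))"
    and "p \<in> {a<..<b} \<times> {c<..<d}" "q \<in> {a<..<b} \<times> {c<..<d}"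
  shows "k p = (k q :: real)"
proof -
  obtain u v u' v' where pq: "p = (u, v)" "q = (u', v')" by (cases p, cases q)
  then have uv: "u \<in> {a<..<b}" "v \<in> {c<..<d}" "u' \<in> {a<..<b}" "v' \<in> {c<..<d}"
    using assms(3,4) by auto
  have "k (u, v) = k (u', v)" by (rule u_slice_const_on_rectangle[OF assms(1) uv(1,3,2)])
  also have "\<dots> = k (u', v')" by (rule v_slice_const_on_rectangle[OF assms(2) uv(3,2,4)])
  finally show ?thesis using pq by simp
qed

lemma inverse_of_positive_antiderivative:
  fixes w :: "real \<Rightarrow> real"
  assumes ab: "a < b" and cont: "continuous_on {a<..<b} w" and pos: "\<And>u. u \<in> {a<..<b} \<Longrightarrow> w u > 0"
  obtains F J \<phi> where "\<And>u. u \<in> {a<..<b} \<Longrightarrow> (F has_real_derivative w u) (at u)" "open J"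
    "J = F ` {a<..<b}" "\<And>s. s \<in> J \<Longrightarrow> \<phi> s \<in> {a<..<b}" "\<And>s. s \<in> J \<Longrightarrow> F (\<phi> s) = s"
    "\<And>u. u \<in> {a<..<b} \<Longrightarrow> \<phi> (F u) = u"
    "\<And>s. s \<in> J \<Longrightarrow> (\<phi> has_real_derivative inverse (w (\<phi> s))) (at s)"
proof -
  have "\<And>u. u \<in> {a<..<b} \<Longrightarrow> isCont w u"
    using cont continuous_on_eq_continuous_at[of "{a<..<b}" w] by simp
  then have "\<exists>F. \<forall>u. ereal a < ereal u \<longrightarrow> ereal u < ereal b \<longrightarrow> (F has_vector_derivative w u) (at u)"
    using ab by (intro einterval_antiderivative) auto
  then obtain F where F: "\<And>u. u \<in> {a<..<b} \<Longrightarrow> (F has_real_derivative w u) (at u)"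
    by (auto simp: has_real_derivative_iff_has_vector_derivative)
  have contF: "continuous_on {a<..<b} F"
    by (rule continuous_at_imp_continuous_on) (use F DERIV_isCont in blast)
  have "strict_mono_on {a<..<b} F"
  proof (rule strict_mono_onI)
    fix u u' assume uu': "u \<in> {a<..<b}" "u' \<in> {a<..<b}" "u < u'"
    show "F u < F u'"
    proof (rule DERIV_pos_imp_increasing[OF uu'(3)])
      fix z assume "u \<le> z" "z \<le> u'"
      then have "z \<in> {a<..<b}" using uu' by auto
      then show "\<exists>y. (F has_real_derivative y) (at z) \<and> y > 0" using F pos by blast
    qed
  qed
  then have inj: "inj_on F {a<..<b}" by (rule strict_mono_on_imp_inj_on)
  define J where "J = F ` {a<..<b}"
  define \<phi> where "\<phi> = inv_into {a<..<b} F"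
  have oJ: "open J"
    unfolding J_def by (rule invariance_of_domain[OF contF open_greaterThanLessThan inj])
  have \<phi>F: "\<phi> (F u) = u" if "u \<in> {a<..<b}" for u
    unfolding \<phi>_def using inv_into_f_f[OF inj that] .
  have \<phi>J: "\<phi> s \<in> {a<..<b}" "F (\<phi> s) = s" if "s \<in> J" for s
    using that \<phi>F unfolding J_def by auto
  have "continuous_on J \<phi>"
    unfolding J_def
    by (rule continuous_on_inverse_open[OF open_greaterThanLessThan contF]) (use \<phi>F in auto)
  then have cont\<phi>: "isCont \<phi> s" if "s \<in> J" for s
    using continuous_on_eq_continuous_at[OF oJ] that by blast
  have "(\<phi> has_real_derivative inverse (w (\<phi> s))) (at s)" if "s \<in> J" for s
  proof (rule has_field_derivative_inverse_basic[OF _ _ cont\<phi>[OF that] oJ that])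
    show "(F has_real_derivative w (\<phi> s)) (at (\<phi> s))" using F[OF \<phi>J(1)[OF that]] .
    show "w (\<phi> s) \<noteq> 0" using pos[OF \<phi>J(1)[OF that]] by simp
    show "\<And>z. z \<in> J \<Longrightarrow> F (\<phi> z) = z" using \<phi>J(2) .
  qed
  then show ?thesis using that[OF F oJ J_def \<phi>J \<phi>F] by blast
qed

section \<open>Principal parametrizations and the Codazzi equations\<close>

lemma orthogonal_to_cross3_frame_eq_0:
  fixes a b v :: "real^3"
  assumes "cross3 a b \<noteq> 0" "v \<bullet> a = 0" "v \<bullet> b = 0" "v \<bullet> cross3 a b = 0"
  shows "v = 0"
proof -
  have "cross3 v (cross3 a b) = 0" using assms(2,3) by (simp add: Lagrange)
  then have "(norm v * norm (cross3 a b))\<^sup>2 = 0"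
    using norm_cross_dot[of v "cross3 a b"] assms(4) by simp
  then show ?thesis using assms(1) by simp
qed

lemma inner_cross3_frame_expansion:
  fixes a b v w :: "real^3"
  defines "n \<equiv> (1 / norm (cross3 a b)) *\<^sub>R cross3 a b"
  assumes c: "cross3 a b \<noteq> 0" and ab: "a \<bullet> b = 0"
  shows "v \<bullet> w = (v \<bullet> a) * (w \<bullet> a) / (a \<bullet> a) + (v \<bullet> b) * (w \<bullet> b) / (b \<bullet> b) + (v \<bullet> n) * (w \<bullet> n)"
proof -
  have aa: "a \<bullet> a \<noteq> 0" and bb: "b \<bullet> b \<noteq> 0" using c by auto
  have na: "n \<bullet> a = 0" and nb: "n \<bullet> b = 0" unfolding n_def
    by (simp_all add: dot_cross_self inner_commute)
  have nn: "n \<bullet> n = 1" unfolding n_def using c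
    by (simp add: power2_norm_eq_inner[symmetric] power2_eq_square)
  have ba: "b \<bullet> a = 0" and an: "a \<bullet> n = 0" and bn: "b \<bullet> n = 0"
    using ab na nb by (simp_all add: inner_commute)
  define r where "r = v - ((v \<bullet> a) / (a \<bullet> a)) *\<^sub>R a - ((v \<bullet> b) / (b \<bullet> b)) *\<^sub>R b - (v \<bullet> n) *\<^sub>R n"
  have ra: "r \<bullet> a = 0" unfolding r_def inner_diff_left inner_scaleR_left using aa ba na by simp
  have rb: "r \<bullet> b = 0" unfolding r_def inner_diff_left inner_scaleR_left using bb ab nb by simp
  have rn: "r \<bullet> n = 0" unfolding r_def inner_diff_left inner_scaleR_left using nn an bn by simp
  have "cross3 a b = norm (cross3 a b) *\<^sub>R n" unfolding n_def using c by simp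
  then have "r \<bullet> cross3 a b = 0" using rn by (metis inner_scaleR_right mult_zero_right)
  then have "r = 0" by (rule orthogonal_to_cross3_frame_eq_0[OF c ra rb])
  then have "v = ((v \<bullet> a) / (a \<bullet> a)) *\<^sub>R a + ((v \<bullet> b) / (b \<bullet> b)) *\<^sub>R b + (v \<bullet> n) *\<^sub>R n"
    unfolding r_def by (simp add: algebra_simps)
  from arg_cong[OF this, of "\<lambda>z. z \<bullet> w"]
  have "v \<bullet> w = (v \<bullet> a) / (a \<bullet> a) * (a \<bullet> w) + (v \<bullet> b) / (b \<bullet> b) * (b \<bullet> w) + (v \<bullet> n) * (n \<bullet> w)"
    by (simp only: inner_add_left inner_scaleR_left)
  then show ?thesis by (simp add: inner_commute)
qed

locale principal_surface =
  fixes U :: "(real \<times> real) set" and x :: surf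
  assumes principal: "principal_param U x"
begin

abbreviation "xu \<equiv> pd_u x"
abbreviation "xv \<equiv> pd_v x"
abbreviation "xuu \<equiv> pd_u (pd_u x)"
abbreviation "xuv \<equiv> pd_v (pd_u x)"
abbreviation "xvv \<equiv> pd_v (pd_v x)"
abbreviation "normal \<equiv> unit_normal x"

lemma open_U: "open U"
  and smooth_x: "smooth_on2 U x"
  and cross_neq_0: "p \<in> U \<Longrightarrow> cross3 (xu p) (xv p) \<noteq> 0"
  and xu_xv_orthogonal: "p \<in> U \<Longrightarrow> xu p \<bullet> xv p = 0"
  and xuv_normal_orthogonal: "p \<in> U \<Longrightarrow> xuv p \<bullet> normal p = 0"
  using principal unfolding principal_param_def fF_def fM_def by blast+

lemma smooth_xu: "smooth_on2 U xu" and smooth_xv: "smooth_on2 U xv"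
  and smooth_xuu: "smooth_on2 U xuu" and smooth_xuv: "smooth_on2 U xuv"
  and smooth_xvv: "smooth_on2 U xvv"
  by (intro smooth_on2_pd_u smooth_on2_pd_v smooth_x)+

lemma pd_u_xv: "p \<in> U \<Longrightarrow> pd_u xv p = xuv p"
  using smooth_on2_pd_v_pd_u_commute[OF open_U smooth_x] by simp

lemma smooth_normal: "smooth_on2 U normal"
proof -
  let ?c = "\<lambda>p. cross3 (xu p) (xv p)"
  have c: "smooth_on2 U ?c" by (rule smooth_on2_cross3[OF open_U smooth_xu smooth_xv])
  have "smooth_on2 U (\<lambda>p. inverse (sqrt (?c p \<bullet> ?c p)))"
    by (intro smooth_on2_inverse smooth_on2_sqrt smooth_on2_inner open_U c)
       (use cross_neq_0 in auto)
  then show ?thesis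
    by (rule smooth_on2_cong[OF open_U smooth_on2_scaleR[OF open_U _ c]])
       (simp add: unit_normal_def norm_eq_sqrt_inner divide_inverse)
qed

lemma fE_eq: "fE x = (\<lambda>p. xu p \<bullet> xu p)" and fG_eq: "fG x = (\<lambda>p. xv p \<bullet> xv p)"
  and fL_eq: "fL x = (\<lambda>p. xuu p \<bullet> normal p)" and fN_eq: "fN x = (\<lambda>p. xvv p \<bullet> normal p)"
  by (simp_all add: fun_eq_iff fE_def fG_def fL_def fN_def)

lemma smooth_fE: "smooth_on2 U (fE x)" and smooth_fG: "smooth_on2 U (fG x)"
  and smooth_fL: "smooth_on2 U (fL x)" and smooth_fN: "smooth_on2 U (fN x)"
  unfolding fE_eq fG_eq fL_eq fN_eq
  by (intro smooth_on2_inner open_U smooth_xu smooth_xv smooth_xuu smooth_xvv smooth_normal)+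

lemma fE_pos: "p \<in> U \<Longrightarrow> fE x p > 0" and fG_pos: "p \<in> U \<Longrightarrow> fG x p > 0"
  using cross_neq_0[of p] by (auto simp: fE_def fG_def)

lemma normal_xu: "normal p \<bullet> xu p = 0" and normal_xv: "normal p \<bullet> xv p = 0"
  unfolding unit_normal_def by (simp_all add: dot_cross_self)

lemma normal_normal: "p \<in> U \<Longrightarrow> normal p \<bullet> normal p = 1"
  using cross_neq_0[of p] unfolding unit_normal_def
  by (simp add: power2_norm_eq_inner[symmetric] power2_eq_square)

lemmas normal_differentiable = smooth_on2_imp_differentiable[OF smooth_normal]
  and xu_differentiable = smooth_on2_imp_differentiable[OF smooth_xu]
  and xv_differentiable = smooth_on2_imp_differentiable[OF smooth_xv]
  and xuu_differentiable = smooth_on2_imp_differentiable[OF smooth_xuu]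
  and xuv_differentiable = smooth_on2_imp_differentiable[OF smooth_xuv]
  and xvv_differentiable = smooth_on2_imp_differentiable[OF smooth_xvv]

lemma pd_u_normal_xu: "p \<in> U \<Longrightarrow> pd_u normal p \<bullet> xu p = - fL x p"
  using pd_u_const_on[OF open_U _ normal_xu] pd_u_inner[OF normal_differentiable xu_differentiable]
  by (simp add: fL_def inner_commute eq_neg_iff_add_eq_0)

lemma pd_u_normal_xv: "p \<in> U \<Longrightarrow> pd_u normal p \<bullet> xv p = 0"
  using pd_u_const_on[OF open_U _ normal_xv] pd_u_inner[OF normal_differentiable xv_differentiable]
    pd_u_xv xuv_normal_orthogonal by (simp add: inner_commute)

lemma pd_u_normal_normal: "p \<in> U \<Longrightarrow> pd_u normal p \<bullet> normal p = 0"
  using pd_u_const_on[OF open_U _ normal_normal] pd_u_inner[OF normal_differentiable normal_differentiable]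
  by (simp add: inner_commute)

lemma pd_v_normal_xu: "p \<in> U \<Longrightarrow> pd_v normal p \<bullet> xu p = 0"
  using pd_v_const_on[OF open_U _ normal_xu] pd_v_inner[OF normal_differentiable xu_differentiable]
    xuv_normal_orthogonal by (simp add: inner_commute)

lemma pd_v_normal_xv: "p \<in> U \<Longrightarrow> pd_v normal p \<bullet> xv p = - fN x p"
  using pd_v_const_on[OF open_U _ normal_xv] pd_v_inner[OF normal_differentiable xv_differentiable]
  by (simp add: fN_def inner_commute eq_neg_iff_add_eq_0)

lemma pd_v_normal_normal: "p \<in> U \<Longrightarrow> pd_v normal p \<bullet> normal p = 0"
  using pd_v_const_on[OF open_U _ normal_normal] pd_v_inner[OF normal_differentiable normal_differentiable]
  by (simp add: inner_commute)

lemma pd_v_fE: "p \<in> U \<Longrightarrow> pd_v (fE x) p = 2 * (xuv p \<bullet> xu p)"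
  unfolding fE_eq using pd_v_inner[OF xu_differentiable xu_differentiable]
  by (simp add: inner_commute)

lemma pd_u_fG: "p \<in> U \<Longrightarrow> pd_u (fG x) p = 2 * (xuv p \<bullet> xv p)"
  unfolding fG_eq using pd_u_inner[OF xv_differentiable xv_differentiable] pd_u_xv
  by (simp add: inner_commute)

lemma xuu_xv: "p \<in> U \<Longrightarrow> xuu p \<bullet> xv p = - (xuv p \<bullet> xu p)"
  using pd_u_const_on[OF open_U _ xu_xv_orthogonal] pd_u_inner[OF xu_differentiable xv_differentiable]
    pd_u_xv by (simp add: inner_commute add_eq_0_iff)

lemma xvv_xu: "p \<in> U \<Longrightarrow> xvv p \<bullet> xu p = - (xuv p \<bullet> xv p)"
  using pd_v_const_on[OF open_U _ xu_xv_orthogonal] pd_v_inner[OF xu_differentiable xv_differentiable]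
  by (simp add: inner_commute add_eq_0_iff)

lemma inner_frame_expansion:
  "p \<in> U \<Longrightarrow> v \<bullet> w = (v \<bullet> xu p) * (w \<bullet> xu p) / fE x p + (v \<bullet> xv p) * (w \<bullet> xv p) / fG x p
                  + (v \<bullet> normal p) * (w \<bullet> normal p)"
  using inner_cross3_frame_expansion[OF cross_neq_0 xu_xv_orthogonal, of p v w]
  by (simp add: fE_def fG_def unit_normal_def)

lemma codazzi_L:
  assumes pU: "p \<in> U"
  shows "pd_v (fL x) p = pd_v (fE x) p * (nu1 x p + nu2 x p) / 2"
proof -
  have "pd_v (fL x) p = pd_v xuu p \<bullet> normal p + xuu p \<bullet> pd_v normal p"
    unfolding fL_eq using pd_v_inner[OF xuu_differentiable[OF pU] normal_differentiable[OF pU]] .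
  moreover have "pd_u xuv p \<bullet> normal p + xuv p \<bullet> pd_u normal p = 0"
    using pd_u_const_on[OF open_U pU xuv_normal_orthogonal]
      pd_u_inner[OF xuv_differentiable[OF pU] normal_differentiable[OF pU]] by simp
  moreover have "pd_u xuv p = pd_v xuu p"
    using smooth_on2_pd_v_pd_u_commute[OF open_U smooth_xu pU] by simp
  moreover have "xuv p \<bullet> pd_u normal p = (xuv p \<bullet> xu p) * (- fL x p) / fE x p"
    using inner_frame_expansion[OF pU, of "xuv p" "pd_u normal p"] pd_u_normal_xu[OF pU]
      pd_u_normal_xv[OF pU] xuv_normal_orthogonal[OF pU] by (simp add: inner_commute)
  moreover have "xuu p \<bullet> pd_v normal p = (- (xuv p \<bullet> xu p)) * (- fN x p) / fG x p"
    using inner_frame_expansion[OF pU, of "xuu p" "pd_v normal p"] pd_v_normal_xu[OF pU]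
      pd_v_normal_xv[OF pU] pd_v_normal_normal[OF pU] xuu_xv[OF pU] by (simp add: inner_commute)
  ultimately show ?thesis using pd_v_fE[OF pU] by (simp add: nu1_def nu2_def algebra_simps)
qed

lemma codazzi_N:
  assumes pU: "p \<in> U"
  shows "pd_u (fN x) p = pd_u (fG x) p * (nu1 x p + nu2 x p) / 2"
proof -
  have "pd_u (fN x) p = pd_u xvv p \<bullet> normal p + xvv p \<bullet> pd_u normal p"
    unfolding fN_eq using pd_u_inner[OF xvv_differentiable[OF pU] normal_differentiable[OF pU]] .
  moreover have "pd_v xuv p \<bullet> normal p + xuv p \<bullet> pd_v normal p = 0"
    using pd_v_const_on[OF open_U pU xuv_normal_orthogonal]
      pd_v_inner[OF xuv_differentiable[OF pU] normal_differentiable[OF pU]] by simp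
  moreover have "pd_v xuv p = pd_u xvv p"
    using smooth_on2_pd_v_pd_u_commute[OF open_U smooth_xv pU] pd_v_cong[OF open_U pU pd_u_xv]
    by simp
  moreover have "xuv p \<bullet> pd_v normal p = (xuv p \<bullet> xv p) * (- fN x p) / fG x p"
    using inner_frame_expansion[OF pU, of "xuv p" "pd_v normal p"] pd_v_normal_xu[OF pU]
      pd_v_normal_xv[OF pU] xuv_normal_orthogonal[OF pU] by (simp add: inner_commute)
  moreover have "xvv p \<bullet> pd_u normal p = (- (xuv p \<bullet> xv p)) * (- fL x p) / fE x p"
    using inner_frame_expansion[OF pU, of "xvv p" "pd_u normal p"] pd_u_normal_xu[OF pU]
      pd_u_normal_xv[OF pU] pd_u_normal_normal[OF pU] xvv_xu[OF pU] by (simp add: inner_commute)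
  ultimately show ?thesis using pd_u_fG[OF pU] by (simp add: nu1_def nu2_def algebra_simps)
qed

end

section \<open>Rescaling each principal parameter separately\<close>

locale separable_reparam = principal_surface +
  fixes J1 J2 :: "real set" and \<phi>1 \<phi>2 D1 D2 :: "real \<Rightarrow> real"
  assumes open_J1: "open J1" and open_J2: "open J2"
    and maps_into_U: "\<And>s t. s \<in> J1 \<Longrightarrow> t \<in> J2 \<Longrightarrow> (\<phi>1 s, \<phi>2 t) \<in> U"
    and \<phi>1_deriv: "\<And>s. s \<in> J1 \<Longrightarrow> (\<phi>1 has_real_derivative D1 s) (at s)"
    and \<phi>2_deriv: "\<And>t. t \<in> J2 \<Longrightarrow> (\<phi>2 has_real_derivative D2 t) (at t)"
    and D1_pos: "\<And>s. s \<in> J1 \<Longrightarrow> D1 s > 0" and D2_pos: "\<And>t. t \<in> J2 \<Longrightarrow> D2 t > 0"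
    and smooth_\<phi>1: "smooth_on2 (J1 \<times> J2) (\<lambda>q. \<phi>1 (fst q))"
    and smooth_\<phi>2: "smooth_on2 (J1 \<times> J2) (\<lambda>q. \<phi>2 (snd q))"
begin

definition "V = J1 \<times> J2"
definition "phi q = (\<phi>1 (fst q), \<phi>2 (snd q))"
abbreviation "X \<equiv> x \<circ> phi"

lemma open_V: "open V"
  unfolding V_def using open_J1 open_J2 by (rule open_Times)

lemma fst_in_J1: "q \<in> V \<Longrightarrow> fst q \<in> J1" and snd_in_J2: "q \<in> V \<Longrightarrow> snd q \<in> J2"
  unfolding V_def by auto

lemma phi_in_U: "q \<in> V \<Longrightarrow> phi q \<in> U"
  unfolding phi_def using maps_into_U fst_in_J1 snd_in_J2 by blast

lemma comp_phi_differentiable: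
  assumes q: "q \<in> V" and "h differentiable (at (phi q))"
  shows "(\<lambda>q. h (phi q)) differentiable (at q)"
proof (rule differentiable_compose[of h phi, OF assms(2)])
  show "phi differentiable (at q)"
    unfolding phi_def[abs_def] using differentiable_Pair differentiable_comp_fst differentiable_comp_snd
      \<phi>1_deriv[OF fst_in_J1[OF q]] \<phi>2_deriv[OF snd_in_J2[OF q]] by blast
qed

lemma pd_u_comp_phi:
  assumes q: "q \<in> V" and h: "h differentiable (at (phi q))"
  shows "pd_u (\<lambda>q. h (phi q)) q = D1 (fst q) *\<^sub>R pd_u h (phi q)"
  using pd_u_compose_Pair[where G=h and \<alpha>="\<lambda>q. \<phi>1 (fst q)" and \<beta>="\<lambda>q. \<phi>2 (snd q)" and q=q] h
    \<phi>1_deriv[OF fst_in_J1[OF q]] \<phi>2_deriv[OF snd_in_J2[OF q]]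
  by (simp add: phi_def differentiable_comp_fst differentiable_comp_snd pd_u_comp_fst pd_u_comp_snd)

lemma pd_v_comp_phi:
  assumes q: "q \<in> V" and h: "h differentiable (at (phi q))"
  shows "pd_v (\<lambda>q. h (phi q)) q = D2 (snd q) *\<^sub>R pd_v h (phi q)"
  using pd_v_compose_Pair[where G=h and \<alpha>="\<lambda>q. \<phi>1 (fst q)" and \<beta>="\<lambda>q. \<phi>2 (snd q)" and q=q] h
    \<phi>1_deriv[OF fst_in_J1[OF q]] \<phi>2_deriv[OF snd_in_J2[OF q]]
  by (simp add: phi_def differentiable_comp_fst differentiable_comp_snd pd_v_comp_fst pd_v_comp_snd)

lemma D1_has_derivative: "q \<in> V \<Longrightarrow> \<exists>e. (D1 has_real_derivative e) (at (fst q))"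
proof -
  assume q: "q \<in> V"
  let ?g = "pd_u (\<lambda>q. \<phi>1 (fst q))"
  have "?g differentiable (at q)"
    using smooth_on2_imp_differentiable[OF smooth_on2_pd_u[OF smooth_\<phi>1]] q by (simp add: V_def)
  from has_real_derivative_pd_u[OF this]
  have "((\<lambda>t. ?g (t, snd q)) has_real_derivative pd_u ?g q) (at (fst q))" .
  then have "(D1 has_real_derivative pd_u ?g q) (at (fst q))"
    by (rule has_field_derivative_transform_within_open[OF _ open_J1 fst_in_J1[OF q]])
       (simp add: pd_u_comp_fst \<phi>1_deriv)
  then show ?thesis by blast
qed

lemma D2_has_derivative: "q \<in> V \<Longrightarrow> \<exists>e. (D2 has_real_derivative e) (at (snd q))"
proof -
  assume q: "q \<in> V"
  let ?g = "pd_v (\<lambda>q. \<phi>2 (snd q))"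
  have "?g differentiable (at q)"
    using smooth_on2_imp_differentiable[OF smooth_on2_pd_v[OF smooth_\<phi>2]] q by (simp add: V_def)
  from has_real_derivative_pd_v[OF this]
  have "((\<lambda>t. ?g (fst q, t)) has_real_derivative pd_v ?g q) (at (snd q))" .
  then have "(D2 has_real_derivative pd_v ?g q) (at (snd q))"
    by (rule has_field_derivative_transform_within_open[OF _ open_J2 snd_in_J2[OF q]])
       (simp add: pd_v_comp_snd \<phi>2_deriv)
  then show ?thesis by blast
qed

lemma pd_u_X: "q \<in> V \<Longrightarrow> pd_u X q = D1 (fst q) *\<^sub>R xu (phi q)"
  unfolding o_def by (rule pd_u_comp_phi[OF _ smooth_on2_imp_differentiable[OF smooth_x phi_in_U]])

lemma pd_v_X: "q \<in> V \<Longrightarrow> pd_v X q = D2 (snd q) *\<^sub>R xv (phi q)"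
  unfolding o_def by (rule pd_v_comp_phi[OF _ smooth_on2_imp_differentiable[OF smooth_x phi_in_U]])

lemma pd_uu_X:
  assumes q: "q \<in> V"
  shows "\<exists>e. pd_u (pd_u X) q = e *\<^sub>R xu (phi q) + (D1 (fst q) * D1 (fst q)) *\<^sub>R xuu (phi q)"
proof -
  obtain e where e: "(D1 has_real_derivative e) (at (fst q))" using D1_has_derivative[OF q] by blast
  have xu: "xu differentiable (at (phi q))" by (rule xu_differentiable[OF phi_in_U[OF q]])
  have "pd_u (pd_u X) q = pd_u (\<lambda>q. D1 (fst q) *\<^sub>R xu (phi q)) q"
    by (rule pd_u_cong[OF open_V q pd_u_X])
  also have "\<dots> = e *\<^sub>R xu (phi q) + D1 (fst q) *\<^sub>R (D1 (fst q) *\<^sub>R xuu (phi q))"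
    using pd_u_bilinear[OF bounded_bilinear_scaleR differentiable_comp_fst[OF e] comp_phi_differentiable[OF q xu]]
    by (simp add: pd_u_comp_fst[OF e] pd_u_comp_phi[OF q xu])
  finally show ?thesis by auto
qed

lemma pd_uv_X:
  assumes q: "q \<in> V"
  shows "pd_v (pd_u X) q = (D1 (fst q) * D2 (snd q)) *\<^sub>R xuv (phi q)"
proof -
  obtain e where e: "(D1 has_real_derivative e) (at (fst q))" using D1_has_derivative[OF q] by blast
  have xu: "xu differentiable (at (phi q))" by (rule xu_differentiable[OF phi_in_U[OF q]])
  have "pd_v (pd_u X) q = pd_v (\<lambda>q. D1 (fst q) *\<^sub>R xu (phi q)) q"
    by (rule pd_v_cong[OF open_V q pd_u_X])
  also have "\<dots> = (D1 (fst q) * D2 (snd q)) *\<^sub>R xuv (phi q)"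
    using pd_v_bilinear[OF bounded_bilinear_scaleR differentiable_comp_fst[OF e] comp_phi_differentiable[OF q xu]]
    by (simp add: pd_v_comp_fst pd_v_comp_phi[OF q xu])
  finally show ?thesis .
qed

lemma pd_vv_X:
  assumes q: "q \<in> V"
  shows "\<exists>e. pd_v (pd_v X) q = e *\<^sub>R xv (phi q) + (D2 (snd q) * D2 (snd q)) *\<^sub>R xvv (phi q)"
proof -
  obtain e where e: "(D2 has_real_derivative e) (at (snd q))" using D2_has_derivative[OF q] by blast
  have xv: "xv differentiable (at (phi q))" by (rule xv_differentiable[OF phi_in_U[OF q]])
  have "pd_v (pd_v X) q = pd_v (\<lambda>q. D2 (snd q) *\<^sub>R xv (phi q)) q"
    by (rule pd_v_cong[OF open_V q pd_v_X])
  also have "\<dots> = e *\<^sub>R xv (phi q) + D2 (snd q) *\<^sub>R (D2 (snd q) *\<^sub>R xvv (phi q))"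
    using pd_v_bilinear[OF bounded_bilinear_scaleR differentiable_comp_snd[OF e] comp_phi_differentiable[OF q xv]]
    by (simp add: pd_v_comp_snd[OF e] pd_v_comp_phi[OF q xv])
  finally show ?thesis by auto
qed

lemma cross_X: "q \<in> V \<Longrightarrow> cross3 (pd_u X q) (pd_v X q) = (D1 (fst q) * D2 (snd q)) *\<^sub>R cross3 (xu (phi q)) (xv (phi q))"
  by (simp add: pd_u_X pd_v_X cross_mult_left cross_mult_right)

lemma normal_X: "q \<in> V \<Longrightarrow> unit_normal X q = normal (phi q)"
  unfolding unit_normal_def using D1_pos[OF fst_in_J1, of q] D2_pos[OF snd_in_J2, of q]
  by (simp add: cross_X)

lemma fE_X: "q \<in> V \<Longrightarrow> fE X q = (D1 (fst q) * D1 (fst q)) * fE x (phi q)"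
  and fG_X: "q \<in> V \<Longrightarrow> fG X q = (D2 (snd q) * D2 (snd q)) * fG x (phi q)"
  and fF_X: "q \<in> V \<Longrightarrow> fF X q = 0"
  using xu_xv_orthogonal[OF phi_in_U] by (simp_all add: fE_def fG_def fF_def pd_u_X pd_v_X)

lemma fL_X:
  assumes q: "q \<in> V"
  shows "fL X q = (D1 (fst q) * D1 (fst q)) * fL x (phi q)"
proof -
  obtain e where "pd_u (pd_u X) q = e *\<^sub>R xu (phi q) + (D1 (fst q) * D1 (fst q)) *\<^sub>R xuu (phi q)"
    using pd_uu_X[OF q] by blast
  then show ?thesis
    using normal_xu[of "phi q"] by (simp add: fL_def normal_X[OF q] inner_add_left inner_add_right inner_commute)
qed

lemma fM_X: "q \<in> V \<Longrightarrow> fM X q = 0"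
  using xuv_normal_orthogonal[OF phi_in_U] by (simp add: fM_def normal_X pd_uv_X)

lemma fN_X:
  assumes q: "q \<in> V"
  shows "fN X q = (D2 (snd q) * D2 (snd q)) * fN x (phi q)"
proof -
  obtain e where "pd_v (pd_v X) q = e *\<^sub>R xv (phi q) + (D2 (snd q) * D2 (snd q)) *\<^sub>R xvv (phi q)"
    using pd_vv_X[OF q] by blast
  then show ?thesis
    using normal_xv[of "phi q"] by (simp add: fN_def normal_X[OF q] inner_add_left inner_add_right inner_commute)
qed

lemma nu1_X: "q \<in> V \<Longrightarrow> nu1 X q = nu1 x (phi q)"
  using D1_pos[OF fst_in_J1, of q] by (simp add: nu1_def fL_X fE_X)

lemma nu2_X: "q \<in> V \<Longrightarrow> nu2 X q = nu2 x (phi q)"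
  using D2_pos[OF snd_in_J2, of q] by (simp add: nu2_def fN_X fG_X)

lemma pd_v_fE_X:
  assumes q: "q \<in> V"
  shows "pd_v (fE X) q = (D1 (fst q) * D1 (fst q)) * (D2 (snd q) * pd_v (fE x) (phi q))"
proof -
  obtain e where "(D1 has_real_derivative e) (at (fst q))" using D1_has_derivative[OF q] by blast
  then obtain e' where e': "((\<lambda>s. D1 s * D1 s) has_real_derivative e') (at (fst q))"
    using DERIV_mult by blast
  have E: "fE x differentiable (at (phi q))" by (rule smooth_on2_imp_differentiable[OF smooth_fE phi_in_U[OF q]])
  have "pd_v (fE X) q = pd_v (\<lambda>q. (D1 (fst q) * D1 (fst q)) * fE x (phi q)) q"
    by (rule pd_v_cong[OF open_V q fE_X])
  also have "\<dots> = (D1 (fst q) * D1 (fst q)) * (D2 (snd q) * pd_v (fE x) (phi q))"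
    using pd_v_bilinear[OF bounded_bilinear_mult differentiable_comp_fst[OF e'] comp_phi_differentiable[OF q E]]
    by (simp add: pd_v_comp_fst[of "\<lambda>s. D1 s * D1 s"] pd_v_comp_phi[OF q E])
  finally show ?thesis .
qed

lemma pd_u_fG_X:
  assumes q: "q \<in> V"
  shows "pd_u (fG X) q = (D2 (snd q) * D2 (snd q)) * (D1 (fst q) * pd_u (fG x) (phi q))"
proof -
  obtain e where "(D2 has_real_derivative e) (at (snd q))" using D2_has_derivative[OF q] by blast
  then obtain e' where e': "((\<lambda>s. D2 s * D2 s) has_real_derivative e') (at (snd q))"
    using DERIV_mult by blast
  have G: "fG x differentiable (at (phi q))" by (rule smooth_on2_imp_differentiable[OF smooth_fG phi_in_U[OF q]])
  have "pd_u (fG X) q = pd_u (\<lambda>q. (D2 (snd q) * D2 (snd q)) * fG x (phi q)) q"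
    by (rule pd_u_cong[OF open_V q fG_X])
  also have "\<dots> = (D2 (snd q) * D2 (snd q)) * (D1 (fst q) * pd_u (fG x) (phi q))"
    using pd_u_bilinear[OF bounded_bilinear_mult differentiable_comp_snd[OF e'] comp_phi_differentiable[OF q G]]
    by (simp add: pd_u_comp_snd[of "\<lambda>s. D2 s * D2 s"] pd_u_comp_phi[OF q G])
  finally show ?thesis .
qed

lemma gamma1_X: "q \<in> V \<Longrightarrow> gamma1 X q = gamma1 x (phi q)"
  using D1_pos[OF fst_in_J1, of q] D2_pos[OF snd_in_J2, of q] fE_pos[OF phi_in_U, of q]
    fG_pos[OF phi_in_U, of q]
  by (simp add: gamma1_def pd_v_fE_X fE_X fG_X real_sqrt_mult field_simps)

lemma gamma2_X: "q \<in> V \<Longrightarrow> gamma2 X q = gamma2 x (phi q)"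
  using D1_pos[OF fst_in_J1, of q] D2_pos[OF snd_in_J2, of q] fE_pos[OF phi_in_U, of q]
    fG_pos[OF phi_in_U, of q]
  by (simp add: gamma2_def pd_u_fG_X fE_X fG_X real_sqrt_mult field_simps)

lemma principal_param_X: "principal_param V X"
  unfolding principal_param_def
proof (intro conjI ballI open_V)
  have "smooth_on2 V (\<lambda>q. x (\<phi>1 (fst q), \<phi>2 (snd q)))"
    by (rule smooth_on2_compose_Pair[OF open_U open_V smooth_x])
       (use smooth_\<phi>1 smooth_\<phi>2 phi_in_U in \<open>simp_all add: V_def phi_def\<close>)
  then show "smooth_on2 V X" by (simp add: o_def phi_def)
  fix q assume q: "q \<in> V"
  show "cross3 (pd_u X q) (pd_v X q) \<noteq> 0"
    using cross_X[OF q] D1_pos[OF fst_in_J1[OF q]] D2_pos[OF snd_in_J2[OF q]] cross_neq_0[OF phi_in_U[OF q]]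
    by simp
  show "fF X q = 0" "fM X q = 0" using fF_X[OF q] fM_X[OF q] .
qed

lemma strongly_regular_X: "strongly_regular U x \<Longrightarrow> strongly_regular V X"
  unfolding strongly_regular_def
  using principal_param_X phi_in_U nu1_X nu2_X gamma1_X gamma2_X by simp

end

lemma deriv_sum_zero_if_admits_isothermal_geometric_principal:
  assumes adm: "admits_isothermal_geometric_principal U x I f g nu Phi Psi"
    and Phi: "\<And>t. t \<in> I \<Longrightarrow> (Phi has_real_derivative (deriv f t / (f t - g t))) (at t)"
    and Psi: "\<And>t. t \<in> I \<Longrightarrow> (Psi has_real_derivative (deriv g t / (g t - f t))) (at t)"
    and p: "p \<in> U"
  shows "deriv f (nu p) + deriv g (nu p) = 0"
proof -
  obtain V phi where diffeo: "diffeo2 V U phi" and W: "weingarten V (x \<circ> phi) I f g (nu \<circ> phi)"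
    and geom: "geometric_principal V (x \<circ> phi) Phi Psi (nu \<circ> phi)"
    and iso: "\<forall>q\<in>V. fE (x \<circ> phi) q = fG (x \<circ> phi) q \<and> fF (x \<circ> phi) q = 0"
    using adm unfolding admits_isothermal_geometric_principal_def by blast
  have oV: "open V" and "\<exists>q\<in>V. phi q = p"
    using diffeo p unfolding diffeo2_def bij_betw_def by auto
  then obtain q where q: "q \<in> V" "phi q = p" by blast
  let ?\<nu> = "nu \<circ> phi" and ?t = "nu p"
  obtain C where C: "\<And>r. r \<in> V \<Longrightarrow> Phi (?\<nu> r) - Psi (?\<nu> r) = C"
    using geom iso unfolding geometric_principal_def lam_def mu_def by (metis add_diff_cancel_left)
  have \<nu>q: "?\<nu> differentiable (at q)" "?t \<in> I" "pd_u ?\<nu> q \<noteq> 0"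
    using W q unfolding weingarten_def by auto
  have fg: "f ?t - g ?t > 0" using W \<nu>q(2) unfolding weingarten_def by blast
  have "((\<lambda>t. Phi t - Psi t) has_real_derivative
          deriv f ?t / (f ?t - g ?t) - deriv g ?t / (g ?t - f ?t)) (at (?\<nu> q))"
    using Phi[OF \<nu>q(2)] Psi[OF \<nu>q(2)] q by (auto intro: DERIV_diff)
  from DERIV_eq_0_if_comp_const[where \<Theta>="\<lambda>t. Phi t - Psi t", OF oV q(1) _ \<nu>q(1,3) this] C
  have "deriv f ?t / (f ?t - g ?t) - deriv g ?t / (g ?t - f ?t) = 0" by blast
  moreover have "g ?t - f ?t = - (f ?t - g ?t)" by simp
  ultimately have "(deriv f ?t + deriv g ?t) / (f ?t - g ?t) = 0"
    by (simp only: divide_minus_right diff_minus_eq_add add_divide_distrib)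
  then show ?thesis using fg by simp
qed

locale weingarten_rectangle =
  fixes a b c d :: real and U :: "(real \<times> real) set" and x :: surf and I :: "real set"
    and f g :: "real \<Rightarrow> real" and nu :: "real \<times> real \<Rightarrow> real"
  assumes a_less_b: "a < b" and c_less_d: "c < d" and U_def: "U = {a<..<b} \<times> {c<..<d}"
    and weingarten: "weingarten U x I f g nu"
begin

lemma strongly_regular: "strongly_regular U x"
  using weingarten unfolding weingarten_def by blast

sublocale principal_surface U x
  using strongly_regular unfolding strongly_regular_def by unfold_locales blast

lemma f_has_derivative: "t \<in> I \<Longrightarrow> (f has_real_derivative deriv f t) (at t)"
  and g_has_derivative: "t \<in> I \<Longrightarrow> (g has_real_derivative deriv g t) (at t)"
  and f_minus_g_pos: "t \<in> I \<Longrightarrow> f t - g t > 0"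
  using weingarten DERIV_deriv_iff_real_differentiable unfolding weingarten_def by blast+

lemma nu_differentiable: "p \<in> U \<Longrightarrow> nu differentiable (at p)"
  and nu_in_I: "p \<in> U \<Longrightarrow> nu p \<in> I"
  and pd_u_nu_neq_0: "p \<in> U \<Longrightarrow> pd_u nu p \<noteq> 0"
  and pd_v_nu_neq_0: "p \<in> U \<Longrightarrow> pd_v nu p \<noteq> 0"
  and nu1_eq: "p \<in> U \<Longrightarrow> nu1 x p = f (nu p)"
  and nu2_eq: "p \<in> U \<Longrightarrow> nu2 x p = g (nu p)"
  using weingarten unfolding weingarten_def by auto

lemma comp_nu_const:
  assumes "\<And>p. p \<in> U \<Longrightarrow> (\<Theta> has_real_derivative 0) (at (nu p))"
  shows "\<exists>C. \<forall>p\<in>U. \<Theta> (nu p) = C"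
proof -
  have "\<Theta> (nu p) = \<Theta> (nu ((a+b)/2, (c+d)/2))" if "p \<in> U" for p
  proof (rule const_on_rectangle[where k="\<lambda>p. \<Theta> (nu p)"])
    fix q assume "q \<in> {a<..<b} \<times> {c<..<d}"
    then have q: "q \<in> U" by (simp add: U_def)
    have "(\<Theta> has_real_derivative 0) (at (nu (fst q, snd q)))" using assms[OF q] by simp
    then show "((\<lambda>t. \<Theta> (nu (t, snd q))) has_real_derivative 0) (at (fst q))"
      and "((\<lambda>t. \<Theta> (nu (fst q, t))) has_real_derivative 0) (at (snd q))"
      using DERIV_chain2[OF _ has_real_derivative_pd_u[OF nu_differentiable[OF q]]]
        DERIV_chain2[OF _ has_real_derivative_pd_v[OF nu_differentiable[OF q]]] by fastforce+
  qed (use that a_less_b c_less_d U_def in auto)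
  then show ?thesis by blast
qed

lemma deriv_sum_zero_iff_mean_curvature_const:
  "(\<forall>p\<in>U. deriv f (nu p) + deriv g (nu p) = 0) \<longleftrightarrow> (\<exists>H. \<forall>p\<in>U. (f (nu p) + g (nu p)) / 2 = H)"
proof -
  have H': "((\<lambda>t. (f t + g t) / 2) has_real_derivative (deriv f (nu p) + deriv g (nu p)) / 2) (at (nu p))"
    if "p \<in> U" for p
    using f_has_derivative g_has_derivative nu_in_I[OF that] by (auto intro!: derivative_eq_intros)
  show ?thesis
  proof
    assume "\<forall>p\<in>U. deriv f (nu p) + deriv g (nu p) = 0"
    then show "\<exists>H. \<forall>p\<in>U. (f (nu p) + g (nu p)) / 2 = H"
      using comp_nu_const[of "\<lambda>t. (f t + g t) / 2"] H' by simp
  next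
    assume "\<exists>H. \<forall>p\<in>U. (f (nu p) + g (nu p)) / 2 = H"
    then obtain H where H: "\<And>p. p \<in> U \<Longrightarrow> (f (nu p) + g (nu p)) / 2 = H" by blast
    show "\<forall>p\<in>U. deriv f (nu p) + deriv g (nu p) = 0"
      using DERIV_eq_0_if_comp_const[OF open_U _ H nu_differentiable pd_u_nu_neq_0 H'] by simp
  qed
qed

end

section \<open>Constant mean curvature yields isothermal geometric principal parameters\<close>

locale cmc_weingarten_rectangle = weingarten_rectangle +
  fixes H :: real
  assumes mean_curvature: "\<And>p. p \<in> U \<Longrightarrow> (f (nu p) + g (nu p)) / 2 = H"
begin

lemma deriv_sum_zero: "p \<in> U \<Longrightarrow> deriv f (nu p) + deriv g (nu p) = 0"
  using deriv_sum_zero_iff_mean_curvature_const mean_curvature by blast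

definition "P p = fL x p - H * fE x p"
definition "Q p = H * fG x p - fN x p"

lemma P_eq:
  assumes p: "p \<in> U"
  shows "P p = fE x p * (f (nu p) - g (nu p)) / 2"
proof -
  have "P p = f (nu p) * fE x p - H * fE x p"
    using nu1_eq[OF p] fE_pos[OF p] by (simp add: P_def nu1_def field_simps)
  also have "\<dots> = fE x p * (f (nu p) - g (nu p)) / 2"
    by (simp add: mean_curvature[OF p, symmetric] algebra_simps)
  finally show ?thesis .
qed

lemma Q_eq:
  assumes p: "p \<in> U"
  shows "Q p = fG x p * (f (nu p) - g (nu p)) / 2"
proof -
  have "Q p = H * fG x p - g (nu p) * fG x p"
    using nu2_eq[OF p] fG_pos[OF p] by (simp add: Q_def nu2_def field_simps)
  also have "\<dots> = fG x p * (f (nu p) - g (nu p)) / 2"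
    by (simp add: mean_curvature[OF p, symmetric] algebra_simps)
  finally show ?thesis .
qed

lemma P_pos: assumes p: "p \<in> U" shows "P p > 0"
  using P_eq[OF p] mult_pos_pos[OF fE_pos[OF p] f_minus_g_pos[OF nu_in_I[OF p]]] by simp

lemma Q_pos: assumes p: "p \<in> U" shows "Q p > 0"
  using Q_eq[OF p] mult_pos_pos[OF fG_pos[OF p] f_minus_g_pos[OF nu_in_I[OF p]]] by simp

lemma smooth_P: "smooth_on2 U P"
  unfolding P_def[abs_def]
  by (rule smooth_on2_diff[OF open_U smooth_fL smooth_on2_mult[OF open_U smooth_on2_const smooth_fE]])

lemma smooth_Q: "smooth_on2 U Q"
  unfolding Q_def[abs_def]
  by (rule smooth_on2_diff[OF open_U smooth_on2_mult[OF open_U smooth_on2_const smooth_fG] smooth_fN])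

lemma P_indep_v: "(u, v) \<in> U \<Longrightarrow> (u, v') \<in> U \<Longrightarrow> P (u, v) = P (u, v')"
proof (rule v_slice_const_on_rectangle[where k = P, of a b c d])
  fix p assume "p \<in> {a<..<b} \<times> {c<..<d}"
  then have p: "p \<in> U" by (simp add: U_def)
  have "((\<lambda>t. P (fst p, t)) has_real_derivative pd_v (fL x) p - H * pd_v (fE x) p) (at (snd p))"
    unfolding P_def
    by (intro DERIV_diff DERIV_cmult has_real_derivative_pd_v smooth_on2_imp_differentiable[OF _ p]
        smooth_fL smooth_fE)
  moreover have "pd_v (fL x) p - H * pd_v (fE x) p = 0"
    using codazzi_L[OF p] nu1_eq[OF p] nu2_eq[OF p] mean_curvature[OF p] by simp
  ultimately show "((\<lambda>t. P (fst p, t)) has_real_derivative 0) (at (snd p))" by simp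
qed (auto simp: U_def)

lemma Q_indep_u: "(u, v) \<in> U \<Longrightarrow> (u', v) \<in> U \<Longrightarrow> Q (u, v) = Q (u', v)"
proof (rule u_slice_const_on_rectangle[where k = Q, of a b c d])
  fix p assume "p \<in> {a<..<b} \<times> {c<..<d}"
  then have p: "p \<in> U" by (simp add: U_def)
  have "((\<lambda>t. Q (t, snd p)) has_real_derivative H * pd_u (fG x) p - pd_u (fN x) p) (at (fst p))"
    unfolding Q_def
    by (intro DERIV_diff DERIV_cmult has_real_derivative_pd_u smooth_on2_imp_differentiable[OF _ p]
        smooth_fG smooth_fN)
  moreover have "H * pd_u (fG x) p - pd_u (fN x) p = 0"
    using codazzi_N[OF p] nu1_eq[OF p] nu2_eq[OF p] mean_curvature[OF p] by simp
  ultimately show "((\<lambda>t. Q (t, snd p)) has_real_derivative 0) (at (fst p))" by simp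
qed (auto simp: U_def)

text \<open>Since g' = -f', half of the logarithm of f - g is an antiderivative of
  f'/(f - g) along nu.\<close>

lemma comp_nu_eq_half_ln_plus_const:
  assumes "\<And>p. p \<in> U \<Longrightarrow> (\<Theta> has_real_derivative deriv f (nu p) / (f (nu p) - g (nu p))) (at (nu p))"
  shows "\<exists>C. \<forall>p\<in>U. \<Theta> (nu p) = ln (f (nu p) - g (nu p)) / 2 + C"
proof -
  have "((\<lambda>t. \<Theta> t - ln (f t - g t) / 2) has_real_derivative 0) (at (nu p))" if p: "p \<in> U" for p
  proof -
    let ?t = "nu p"
    have fg: "f ?t - g ?t > 0" using f_minus_g_pos[OF nu_in_I[OF p]] .
    have "((\<lambda>t. ln (f t - g t)) has_real_derivative
        inverse (f ?t - g ?t) * (deriv f ?t - deriv g ?t)) (at ?t)"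
      by (rule DERIV_chain2[OF DERIV_ln[OF fg] DERIV_diff[OF f_has_derivative g_has_derivative]])
         (rule nu_in_I[OF p])+
    from DERIV_diff[OF assms[OF p] DERIV_cdivide[OF this, of 2]]
    have "((\<lambda>t. \<Theta> t - ln (f t - g t) / 2) has_real_derivative
        deriv f ?t / (f ?t - g ?t) - inverse (f ?t - g ?t) * (deriv f ?t - deriv g ?t) / 2) (at ?t)" .
    moreover have "deriv f ?t / (f ?t - g ?t) - inverse (f ?t - g ?t) * (deriv f ?t - deriv g ?t) / 2 = 0"
    proof -
      have "deriv g ?t = - deriv f ?t" using deriv_sum_zero[OF p] by simp
      then show ?thesis using fg by (simp add: field_simps)
    qed
    ultimately show ?thesis by simp
  qed
  from comp_nu_const[of "\<lambda>t. \<Theta> t - ln (f t - g t) / 2", OF this]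
  obtain C where "\<And>p. p \<in> U \<Longrightarrow> \<Theta> (nu p) - ln (f (nu p) - g (nu p)) / 2 = C" by blast
  then have "\<forall>p\<in>U. \<Theta> (nu p) = ln (f (nu p) - g (nu p)) / 2 + C" by (simp add: algebra_simps)
  then show ?thesis ..
qed

end

text \<open>F1 and F2 are the rescaled parameters ds = \<surd>P du, dt = \<surd>Q dv as functions of the old
  ones, with inverses \<phi>1 and \<phi>2 (P is evaluated on the line v = v0, Q on u = u0).\<close>

locale cmc_reparam = cmc_weingarten_rectangle +
  fixes u0 v0 :: real and F1 \<phi>1 F2 \<phi>2 :: "real \<Rightarrow> real" and J1 J2 :: "real set"
  assumes u0: "u0 \<in> {a<..<b}" and v0: "v0 \<in> {c<..<d}"
    and F1_has_derivative: "\<And>u. u \<in> {a<..<b} \<Longrightarrow> (F1 has_real_derivative sqrt (P (u, v0))) (at u)"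
    and J1_open: "open J1" and J1_eq: "J1 = F1 ` {a<..<b}"
    and \<phi>1_in_interval: "\<And>s. s \<in> J1 \<Longrightarrow> \<phi>1 s \<in> {a<..<b}"
    and \<phi>1_F1: "\<And>u. u \<in> {a<..<b} \<Longrightarrow> \<phi>1 (F1 u) = u"
    and \<phi>1_has_derivative: "\<And>s. s \<in> J1 \<Longrightarrow> (\<phi>1 has_real_derivative inverse (sqrt (P (\<phi>1 s, v0)))) (at s)"
    and F2_has_derivative: "\<And>v. v \<in> {c<..<d} \<Longrightarrow> (F2 has_real_derivative sqrt (Q (u0, v))) (at v)"
    and J2_open: "open J2" and J2_eq: "J2 = F2 ` {c<..<d}"
    and \<phi>2_in_interval: "\<And>t. t \<in> J2 \<Longrightarrow> \<phi>2 t \<in> {c<..<d}"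
    and \<phi>2_F2: "\<And>v. v \<in> {c<..<d} \<Longrightarrow> \<phi>2 (F2 v) = v"
    and \<phi>2_has_derivative: "\<And>t. t \<in> J2 \<Longrightarrow> (\<phi>2 has_real_derivative inverse (sqrt (Q (u0, \<phi>2 t)))) (at t)"
begin

definition "D1 s = inverse (sqrt (P (\<phi>1 s, v0)))"
definition "D2 t = inverse (sqrt (Q (u0, \<phi>2 t)))"

lemma smooth_inverse_sqrt_P: "smooth_on2 U (\<lambda>p. inverse (sqrt (P p)))"
proof (rule smooth_on2_inverse[OF open_U smooth_on2_sqrt[OF open_U smooth_P P_pos]])
  show "sqrt (P p) \<noteq> 0" if "p \<in> U" for p using P_pos[OF that] by simp
qed

lemma smooth_inverse_sqrt_Q: "smooth_on2 U (\<lambda>p. inverse (sqrt (Q p)))"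
proof (rule smooth_on2_inverse[OF open_U smooth_on2_sqrt[OF open_U smooth_Q Q_pos]])
  show "sqrt (Q p) \<noteq> 0" if "p \<in> U" for p using Q_pos[OF that] by simp
qed

lemma smooth_\<phi>1: "smooth_on2 (J1 \<times> J2) (\<lambda>q. \<phi>1 (fst q))"
  unfolding smooth_on2_def
proof
  have V: "open (J1 \<times> J2)" using J1_open J2_open by (rule open_Times)
  fix k show "Ck_on k (J1 \<times> J2) (\<lambda>q. \<phi>1 (fst q))"
  proof (induction k)
    case 0
    have "continuous_on J1 \<phi>1"
      by (rule continuous_at_imp_continuous_on) (use \<phi>1_has_derivative DERIV_isCont in blast)
    then have "continuous_on (J1 \<times> J2) (\<lambda>q. \<phi>1 (fst q))"
      by (rule continuous_on_compose2[OF _ continuous_on_fst[OF continuous_on_id]]) auto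
    then show ?case by simp
  next
    case (Suc k)
    have "Ck_on k (J1 \<times> J2) (\<lambda>q. inverse (sqrt (P (\<phi>1 (fst q), v0))))"
    proof (rule Ck_on_compose_Pair[where G="\<lambda>p. inverse (sqrt (P p))", OF open_U V _ Suc.IH Ck_on_const])
      show "Ck_on k U (\<lambda>p. inverse (sqrt (P p)))"
        using smooth_inverse_sqrt_P unfolding smooth_on2_def ..
      show "(\<phi>1 (fst q), v0) \<in> U" if "q \<in> J1 \<times> J2" for q
        using \<phi>1_in_interval that v0 by (auto simp: U_def)
    qed
    from Ck_on_Suc_comp_fst[OF V _ this] \<phi>1_has_derivative show ?case by auto
  qed
qed

lemma smooth_\<phi>2: "smooth_on2 (J1 \<times> J2) (\<lambda>q. \<phi>2 (snd q))"
  unfolding smooth_on2_def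
proof
  have V: "open (J1 \<times> J2)" using J1_open J2_open by (rule open_Times)
  fix k show "Ck_on k (J1 \<times> J2) (\<lambda>q. \<phi>2 (snd q))"
  proof (induction k)
    case 0
    have "continuous_on J2 \<phi>2"
      by (rule continuous_at_imp_continuous_on) (use \<phi>2_has_derivative DERIV_isCont in blast)
    then have "continuous_on (J1 \<times> J2) (\<lambda>q. \<phi>2 (snd q))"
      by (rule continuous_on_compose2[OF _ continuous_on_snd[OF continuous_on_id]]) auto
    then show ?case by simp
  next
    case (Suc k)
    have "Ck_on k (J1 \<times> J2) (\<lambda>q. inverse (sqrt (Q (u0, \<phi>2 (snd q)))))"
    proof (rule Ck_on_compose_Pair[where G="\<lambda>p. inverse (sqrt (Q p))", OF open_U V _ Ck_on_const Suc.IH])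
      show "Ck_on k U (\<lambda>p. inverse (sqrt (Q p)))"
        using smooth_inverse_sqrt_Q unfolding smooth_on2_def ..
      show "(u0, \<phi>2 (snd q)) \<in> U" if "q \<in> J1 \<times> J2" for q
        using \<phi>2_in_interval that u0 by (auto simp: U_def)
    qed
    from Ck_on_Suc_comp_snd[OF V _ this] \<phi>2_has_derivative show ?case by auto
  qed
qed

sublocale separable_reparam U x J1 J2 \<phi>1 \<phi>2 D1 D2
proof unfold_locales
  show "(\<phi>1 s, \<phi>2 t) \<in> U" if "s \<in> J1" "t \<in> J2" for s t
    using \<phi>1_in_interval[OF that(1)] \<phi>2_in_interval[OF that(2)] by (simp add: U_def)
  show "D1 s > 0" if "s \<in> J1" for s
    using P_pos \<phi>1_in_interval[OF that] v0 by (simp add: D1_def U_def)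
  show "D2 t > 0" if "t \<in> J2" for t
    using Q_pos \<phi>2_in_interval[OF that] u0 by (simp add: D2_def U_def)
qed (use J1_open J2_open \<phi>1_has_derivative \<phi>2_has_derivative smooth_\<phi>1 smooth_\<phi>2 in
      \<open>simp_all add: D1_def D2_def\<close>)

end

context cmc_reparam
begin

lemma fE_X_eq: "q \<in> V \<Longrightarrow> fE X q = 2 / (f (nu (phi q)) - g (nu (phi q)))"
  and fG_X_eq: "q \<in> V \<Longrightarrow> fG X q = 2 / (f (nu (phi q)) - g (nu (phi q)))"
proof -
  assume q: "q \<in> V"
  have U: "phi q \<in> U" "(\<phi>1 (fst q), v0) \<in> U" "(u0, \<phi>2 (snd q)) \<in> U"
    using phi_in_U[OF q] fst_in_J1[OF q] snd_in_J2[OF q] \<phi>1_in_interval \<phi>2_in_interval u0 v0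
    by (auto simp: U_def)
  have "P (\<phi>1 (fst q), v0) = P (phi q)" and "Q (u0, \<phi>2 (snd q)) = Q (phi q)"
    using P_indep_v[OF U(2)] Q_indep_u[OF U(3)] U(1) by (simp_all add: phi_def)
  then have "D1 (fst q) * D1 (fst q) = inverse (P (phi q))"
    and "D2 (snd q) * D2 (snd q) = inverse (Q (phi q))"
    using P_pos[OF U(1)] Q_pos[OF U(1)] by (simp_all add: D1_def D2_def inverse_mult_distrib[symmetric])
  then show "fE X q = 2 / (f (nu (phi q)) - g (nu (phi q)))"
    and "fG X q = 2 / (f (nu (phi q)) - g (nu (phi q)))"
    using fE_X[OF q] fG_X[OF q] P_eq[OF U(1)] Q_eq[OF U(1)] fE_pos[OF U(1)] fG_pos[OF U(1)]
      f_minus_g_pos[OF nu_in_I[OF U(1)]] by (simp_all add: field_simps)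
qed

lemma F1_\<phi>1: "s \<in> J1 \<Longrightarrow> F1 (\<phi>1 s) = s" and F2_\<phi>2: "t \<in> J2 \<Longrightarrow> F2 (\<phi>2 t) = t"
  using J1_eq J2_eq \<phi>1_F1 \<phi>2_F2 by auto

lemma bij_phi: "bij_betw phi V U"
  and inv_phi: "p \<in> U \<Longrightarrow> inv_into V phi p = (F1 (fst p), F2 (snd p))"
proof -
  have inv: "(F1 (fst p), F2 (snd p)) \<in> V \<and> phi (F1 (fst p), F2 (snd p)) = p" if "p \<in> U" for p
    unfolding V_def phi_def using that J1_eq J2_eq \<phi>1_F1 \<phi>2_F2 by (auto simp: U_def)
  have inj: "inj_on phi V"
  proof (rule inj_onI)
    fix q q' assume "q \<in> V" "q' \<in> V" "phi q = phi q'"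
    then have "F1 (\<phi>1 (fst q)) = F1 (\<phi>1 (fst q'))" "F2 (\<phi>2 (snd q)) = F2 (\<phi>2 (snd q'))"
      by (simp_all add: phi_def)
    with \<open>q \<in> V\<close> \<open>q' \<in> V\<close> show "q = q'"
      using F1_\<phi>1[OF fst_in_J1] F2_\<phi>2[OF snd_in_J2] by (simp add: prod_eq_iff)
  qed
  have "phi ` V = U"
  proof
    show "phi ` V \<subseteq> U" using phi_in_U by auto
    show "U \<subseteq> phi ` V"
    proof
      fix p assume "p \<in> U"
      then show "p \<in> phi ` V"
        using rev_image_eqI[of "(F1 (fst p), F2 (snd p))" V p phi] inv by simp
    qed
  qed
  then show "bij_betw phi V U" using inj by (rule bij_betw_imageI[rotated])
  show "inv_into V phi p = (F1 (fst p), F2 (snd p))" if "p \<in> U"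
    using inv_into_f_eq[OF inj] inv[OF that] by blast
qed

lemma smooth_F1: "smooth_on2 U (\<lambda>p. F1 (fst p))"
  unfolding smooth_on2_def
proof
  fix k
  have "smooth_on2 U (\<lambda>p. sqrt (P (fst p, v0)))"
    by (rule smooth_on2_compose_Pair[OF open_U open_U smooth_on2_sqrt[OF open_U smooth_P P_pos]
          smooth_on2_fst smooth_on2_const]) (use v0 in \<open>auto simp: U_def\<close>)
  then have "Ck_on k U (\<lambda>p. sqrt (P (fst p, v0)))" unfolding smooth_on2_def ..
  moreover have "(F1 has_real_derivative sqrt (P (fst p, v0))) (at (fst p))" if "p \<in> U" for p
    using that by (intro F1_has_derivative) (simp add: U_def mem_Times_iff)
  ultimately have "Ck_on (Suc k) U (\<lambda>p. F1 (fst p))"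
    by (intro Ck_on_Suc_comp_fst[OF open_U])
  then show "Ck_on k U (\<lambda>p. F1 (fst p))" by (rule Ck_on_Suc_imp_Ck_on)
qed

lemma smooth_F2: "smooth_on2 U (\<lambda>p. F2 (snd p))"
  unfolding smooth_on2_def
proof
  fix k
  have "smooth_on2 U (\<lambda>p. sqrt (Q (u0, snd p)))"
    by (rule smooth_on2_compose_Pair[OF open_U open_U smooth_on2_sqrt[OF open_U smooth_Q Q_pos]
          smooth_on2_const smooth_on2_snd]) (use u0 in \<open>auto simp: U_def\<close>)
  then have "Ck_on k U (\<lambda>p. sqrt (Q (u0, snd p)))" unfolding smooth_on2_def ..
  moreover have "(F2 has_real_derivative sqrt (Q (u0, snd p))) (at (snd p))" if "p \<in> U" for p
    using that by (intro F2_has_derivative) (simp add: U_def mem_Times_iff)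
  ultimately have "Ck_on (Suc k) U (\<lambda>p. F2 (snd p))"
    by (intro Ck_on_Suc_comp_snd[OF open_U])
  then show "Ck_on k U (\<lambda>p. F2 (snd p))" by (rule Ck_on_Suc_imp_Ck_on)
qed

lemma diffeo2_phi: "diffeo2 V U phi"
  unfolding diffeo2_def
proof (intro conjI open_V open_U bij_phi)
  show "smooth_on2 V phi"
    unfolding phi_def[abs_def] V_def using open_J1 open_J2
    by (intro smooth_on2_Pair open_Times smooth_\<phi>1 smooth_\<phi>2)
  show "smooth_on2 U (inv_into V phi)"
    by (rule smooth_on2_cong[OF open_U smooth_on2_Pair[OF open_U smooth_F1 smooth_F2]])
       (simp add: inv_phi)
qed

lemma weingarten_X: "weingarten V X I f g (nu \<circ> phi)"
  unfolding weingarten_def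
proof (intro conjI ballI strongly_regular_X strongly_regular)
  show "is_interval I" using weingarten unfolding weingarten_def by blast
  fix t assume "t \<in> I"
  then show "f differentiable (at t)" "g differentiable (at t)" "f t - g t > 0"
    "deriv f t * deriv g t \<noteq> 0"
    using weingarten unfolding weingarten_def by blast+
next
  fix q assume q: "q \<in> V"
  have p: "phi q \<in> U" by (rule phi_in_U[OF q])
  have nu: "nu differentiable (at (phi q))" by (rule nu_differentiable[OF p])
  show "(nu \<circ> phi) differentiable (at q)"
    using comp_phi_differentiable[OF q nu] by (simp add: o_def)
  show "pd_u (nu \<circ> phi) q * pd_v (nu \<circ> phi) q \<noteq> 0"
    using pd_u_comp_phi[OF q nu] pd_v_comp_phi[OF q nu] D1_pos[OF fst_in_J1[OF q]]
      D2_pos[OF snd_in_J2[OF q]] pd_u_nu_neq_0[OF p] pd_v_nu_neq_0[OF p] by (simp add: o_def)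
  show "(nu \<circ> phi) q \<in> I" "nu1 X q = f ((nu \<circ> phi) q)" "nu2 X q = g ((nu \<circ> phi) q)"
    using nu_in_I[OF p] nu1_X[OF q] nu1_eq[OF p] nu2_X[OF q] nu2_eq[OF p] by simp_all
qed

lemma geometric_principal_X:
  assumes Phi: "\<And>t. t \<in> I \<Longrightarrow> (Phi has_real_derivative (deriv f t / (f t - g t))) (at t)"
    and Psi: "\<And>t. t \<in> I \<Longrightarrow> (Psi has_real_derivative (deriv g t / (g t - f t))) (at t)"
  shows "geometric_principal V X Phi Psi (nu \<circ> phi)"
proof -
  have Psi': "(Psi has_real_derivative deriv f (nu p) / (f (nu p) - g (nu p))) (at (nu p))"
    if p: "p \<in> U" for p
  proof -
    have "deriv g (nu p) = - deriv f (nu p)" using deriv_sum_zero[OF p] by simp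
    moreover have "g (nu p) - f (nu p) = - (f (nu p) - g (nu p))" by simp
    ultimately have "deriv g (nu p) / (g (nu p) - f (nu p)) = deriv f (nu p) / (f (nu p) - g (nu p))"
      by (simp only: divide_minus_right divide_minus_left minus_minus)
    then show ?thesis using Psi[OF nu_in_I[OF p]] by simp
  qed
  have "(Phi has_real_derivative deriv f (nu p) / (f (nu p) - g (nu p))) (at (nu p))"
    if "p \<in> U" for p using Phi[OF nu_in_I[OF that]] .
  from comp_nu_eq_half_ln_plus_const[OF this]
  obtain C where C: "\<And>p. p \<in> U \<Longrightarrow> Phi (nu p) = ln (f (nu p) - g (nu p)) / 2 + C" by blast
  from comp_nu_eq_half_ln_plus_const[OF Psi']
  obtain C' where C': "\<And>p. p \<in> U \<Longrightarrow> Psi (nu p) = ln (f (nu p) - g (nu p)) / 2 + C'" by blast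
  have ln: "ln (sqrt (2 / y)) = ln 2 / 2 - ln y / 2" if "y > 0" for y :: real
    using that by (simp add: ln_sqrt ln_div)
  have "lam X Phi (nu \<circ> phi) q = ln 2 / 2 + C" and "mu X Psi (nu \<circ> phi) q = ln 2 / 2 + C'"
    if q: "q \<in> V" for q
    using C[OF phi_in_U[OF q]] C'[OF phi_in_U[OF q]] fE_X_eq[OF q] fG_X_eq[OF q]
      ln[OF f_minus_g_pos[OF nu_in_I[OF phi_in_U[OF q]]]] by (simp_all add: lam_def mu_def)
  then show ?thesis unfolding geometric_principal_def by blast
qed

lemma admits_isothermal_geometric_principal:
  assumes "\<And>t. t \<in> I \<Longrightarrow> (Phi has_real_derivative (deriv f t / (f t - g t))) (at t)"
    and "\<And>t. t \<in> I \<Longrightarrow> (Psi has_real_derivative (deriv g t / (g t - f t))) (at t)"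
  shows "admits_isothermal_geometric_principal U x I f g nu Phi Psi"
  unfolding admits_isothermal_geometric_principal_def
proof (intro exI conjI ballI)
  show "diffeo2 V U phi" "weingarten V X I f g (nu \<circ> phi)" "geometric_principal V X Phi Psi (nu \<circ> phi)"
    using diffeo2_phi weingarten_X geometric_principal_X[OF assms] .
  show "fE X q = fG X q" "fF X q = 0" if "q \<in> V" for q
    using fE_X_eq[OF that] fG_X_eq[OF that] fF_X[OF that] by simp_all
qed

end

context cmc_weingarten_rectangle
begin

lemma admits_isothermal_geometric_principal:
  assumes "\<And>t. t \<in> I \<Longrightarrow> (Phi has_real_derivative (deriv f t / (f t - g t))) (at t)"
    and "\<And>t. t \<in> I \<Longrightarrow> (Psi has_real_derivative (deriv g t / (g t - f t))) (at t)"
  shows "admits_isothermal_geometric_principal U x I f g nu Phi Psi"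
proof -
  define u0 where "u0 = (a + b) / 2"
  define v0 where "v0 = (c + d) / 2"
  have u0: "u0 \<in> {a<..<b}" and v0: "v0 \<in> {c<..<d}"
    using a_less_b c_less_d by (auto simp: u0_def v0_def)
  have "smooth_on2 U (\<lambda>p. sqrt (P p))" "smooth_on2 U (\<lambda>p. sqrt (Q p))"
    using smooth_on2_sqrt[OF open_U smooth_P] smooth_on2_sqrt[OF open_U smooth_Q] P_pos Q_pos by blast+
  then have cont: "continuous_on U (\<lambda>p. sqrt (P p))" "continuous_on U (\<lambda>p. sqrt (Q p))"
    by (simp_all add: smooth_on2_imp_continuous_on)
  have cont1: "continuous_on {a<..<b} (\<lambda>u. sqrt (P (u, v0)))"
    by (rule continuous_on_compose2[OF cont(1) continuous_on_Pair[OF continuous_on_id continuous_on_const]])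
       (use v0 in \<open>auto simp: U_def\<close>)
  have cont2: "continuous_on {c<..<d} (\<lambda>v. sqrt (Q (u0, v)))"
    by (rule continuous_on_compose2[OF cont(2) continuous_on_Pair[OF continuous_on_const continuous_on_id]])
       (use u0 in \<open>auto simp: U_def\<close>)
  have pos1: "sqrt (P (u, v0)) > 0" if "u \<in> {a<..<b}" for u
    using P_pos[of "(u, v0)"] that v0 by (simp add: U_def)
  have pos2: "sqrt (Q (u0, v)) > 0" if "v \<in> {c<..<d}" for v
    using Q_pos[of "(u0, v)"] that u0 by (simp add: U_def)
  obtain F1 J1 \<phi>1 where R1:
    "\<And>u. u \<in> {a<..<b} \<Longrightarrow> (F1 has_real_derivative sqrt (P (u, v0))) (at u)"
    "open J1" "J1 = F1 ` {a<..<b}" "\<And>s. s \<in> J1 \<Longrightarrow> \<phi>1 s \<in> {a<..<b}"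
    "\<And>s. s \<in> J1 \<Longrightarrow> F1 (\<phi>1 s) = s" "\<And>u. u \<in> {a<..<b} \<Longrightarrow> \<phi>1 (F1 u) = u"
    "\<And>s. s \<in> J1 \<Longrightarrow> (\<phi>1 has_real_derivative inverse (sqrt (P (\<phi>1 s, v0)))) (at s)"
    by (rule inverse_of_positive_antiderivative[OF a_less_b cont1], erule pos1, rule that)
  obtain F2 J2 \<phi>2 where R2:
    "\<And>v. v \<in> {c<..<d} \<Longrightarrow> (F2 has_real_derivative sqrt (Q (u0, v))) (at v)"
    "open J2" "J2 = F2 ` {c<..<d}" "\<And>t. t \<in> J2 \<Longrightarrow> \<phi>2 t \<in> {c<..<d}"
    "\<And>t. t \<in> J2 \<Longrightarrow> F2 (\<phi>2 t) = t" "\<And>v. v \<in> {c<..<d} \<Longrightarrow> \<phi>2 (F2 v) = v"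
    "\<And>t. t \<in> J2 \<Longrightarrow> (\<phi>2 has_real_derivative inverse (sqrt (Q (u0, \<phi>2 t)))) (at t)"
    by (rule inverse_of_positive_antiderivative[OF c_less_d cont2], erule pos2, rule that)
  interpret cmc_reparam a b c d U x I f g nu H u0 v0 F1 \<phi>1 F2 \<phi>2 J1 J2
    using u0 v0 R1(1-4,6-7) R2(1-4,6-7) by unfold_locales
  show ?thesis using admits_isothermal_geometric_principal[OF assms] .
qed

end

theorem corollary4p7:
  fixes x :: surf and f g Phi Psi :: "real \<Rightarrow> real" and nu :: "real \<times> real \<Rightarrow> real"
    and I :: "real set" and a b c d :: real
  assumes "a < b" and "c < d"
    and U_def: "U = {a<..<b} \<times> {c<..<d}"
    and "open I"
    and W: "weingarten U x I f g nu"
    and Phi: "\<And>t. t \<in> I \<Longrightarrow> (Phi has_real_derivative (deriv f t / (f t - g t))) (at t)"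
    and Psi: "\<And>t. t \<in> I \<Longrightarrow> (Psi has_real_derivative (deriv g t / (g t - f t))) (at t)"
  shows "(admits_isothermal_geometric_principal U x I f g nu Phi Psi \<longleftrightarrow>
            (\<forall>p\<in>U. deriv f (nu p) + deriv g (nu p) = 0))
       \<and> ((\<forall>p\<in>U. deriv f (nu p) + deriv g (nu p) = 0) \<longleftrightarrow>
            (\<exists>H. \<forall>p\<in>U. (f (nu p) + g (nu p)) / 2 = H))"
proof -
  interpret weingarten_rectangle a b c d U x I f g nu
    using assms(1-3) W by unfold_locales
  have "admits_isothermal_geometric_principal U x I f g nu Phi Psi \<longleftrightarrow>
          (\<forall>p\<in>U. deriv f (nu p) + deriv g (nu p) = 0)"
  proof
    assume "admits_isothermal_geometric_principal U x I f g nu Phi Psi"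
    then show "\<forall>p\<in>U. deriv f (nu p) + deriv g (nu p) = 0"
      by (intro ballI deriv_sum_zero_if_admits_isothermal_geometric_principal[OF _ Phi Psi])
  next
    assume "\<forall>p\<in>U. deriv f (nu p) + deriv g (nu p) = 0"
    then obtain H where "\<And>p. p \<in> U \<Longrightarrow> (f (nu p) + g (nu p)) / 2 = H"
      unfolding deriv_sum_zero_iff_mean_curvature_const by blast
    then interpret cmc_weingarten_rectangle a b c d U x I f g nu H
      by unfold_locales
    show "admits_isothermal_geometric_principal U x I f g nu Phi Psi"
      by (rule admits_isothermal_geometric_principal[OF Phi Psi])
  qed
  then show ?thesis using deriv_sum_zero_iff_mean_curvature_const ..
qed

end
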